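(* Suppose that at the end of iteration $h$ of the merging procedure, $[\ell,m]$ is a monochrome block of $Z^{(h)}$. Then (i) $Z^{(g)}[\ell,m]=Z^{(h)}[\ell,m]$ for every $g>h$; and (ii) during iteration $h+1$, for each symbol $c$, the set of positions $j$ assigned (i.e. at which $Z^{(h+1)}[j]$ is written) while the loop index $k$ ranges over $[\ell,m]$ and the symbol read is $c$ forms a monochrome block of $Z^{(h+1)}$ at the end of iteration $h+1$.
   Context: Let $\Sigma$ be a finite totally ordered alphabet. Let $\mathsf{t}_0[1,n_0]$ and $\mathsf{t}_1[1,n_1]$ be strings with $\mathsf{t}_0[n_0]=\$_0$ and $\mathsf{t}_1[n_1]=\$_1$, where $\$_0<\$_1$ are symbols occurring nowhere else in $\mathsf{t}_0,\mathsf{t}_1$ and smaller than every other symbol. Let $n=n_0+n_1$. For $b\in\{0,1\}$, $\mathsf{sa}_b[1,n_b]$ is the suffix array of $\mathsf{t}_b$ (the permutation of $[1,n_b]$ listing the starting positions of suffixes in increasing lexicographic order). The BWT of $\mathsf{t}_b$ is $\mathsf{bwt}_b[i]=\mathsf{t}_b[\mathsf{sa}_b[i]-1]$ if $\mathsf{sa}_b[i]>1$ and $\mathsf{bwt}_b[i]=\mathsf{t}_b[n_b]$ if $\mathsf{sa}_b[i]=1$. Merging procedure. Initially (this is the "end of iteration 0") $Z^{(0)}=0^{n_0}1^{n_1}$ and $B[1,n+1]$ is the integer array $B=1\,0^{n-1}\,1$. For $h=1,2,\ldots$, iteration $h$ computes the bit vector $Z^{(h)}[1,n]$ from $Z^{(h-1)}$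 and updates $B$ in place, as follows. Set, for each symbol $c$, $F[c]=1+$ (number of entries of $\mathsf{bwt}_0$ and $\mathsf{bwt}_1$ strictly smaller than $c$, counting $\$_0,\$_1$) and $\mathsf{Block\_id}[c]=-1$; set $k_0=k_1=1$. For $k=1,2,\ldots,n$ in order: if $B[k]\neq 0$ and $B[k]\neq h$, set $\mathsf{id}:=k$; let $b=Z^{(h-1)}[k]$, $c=\mathsf{bwt}_b[k_b]$, and increment $k_b$; if $c\notin\{\$_0,\$_1\}$ set $j:=F[c]$ and increment $F[c]$, otherwise set $j:=b+1$; set $Z^{(h)}[j]:=b$; if $\mathsf{Block\_id}[c]\neq\mathsf{id}$, then set $\mathsf{Block\_id}[c]:=\mathsf{id}$ and, if $B[j]=0$, set $B[j]:=h$. "At the end of iteration $h$" refers to the state of $Z^{(h)}$ and $B$ after iteration $h$ is completed. Blocks. At the end of iteration $h$, an interval $[\ell,m]$ with $1\le\ell\le m\le n$ such that $B[\ell]\neq0$, $B[\ell+1]=\cdots=B[m]=0$ and $B[m+1]\neq0$ is a block of $Z^{(h)}$; it is monochrome if $Z^{(h)}[\ell],\ldots,Z^{(h)}[m]$ are all $0$ or all $1$. *)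

theory Defs
  imports Main
begin

text \<open>Strings are lists; position i (1-based) of t is t ! (i-1).
  The suffix starting at position i is drop (i-1) t.\<close>

definition suffix_at :: "'a list \<Rightarrow> nat \<Rightarrow> 'a list" where
  "suffix_at t i = drop (i - 1) t"

definition is_suffix_array :: "'a::linorder list \<Rightarrow> nat list \<Rightarrow> bool" where
  "is_suffix_array t s \<longleftrightarrow>
     length s = length t \<and> set s = {1..length t} \<and>
     sorted_wrt (\<lambda>i j. ord_class.lexordp (suffix_at t i) (suffix_at t j)) s"

definition sa :: "'a::linorder list \<Rightarrow> nat list" where
  "sa t = (THE s. is_suffix_array t s)"

text \<open>BWT as a list; entry i (1-based) is (bwt t) ! (i-1).\<close>
definition bwt :: "'a::linorder list \<Rightarrow> 'a list" where
  "bwt t = map (\<lambda>p. if p > 1 then t ! (p - 2) else t ! (length t - 1)) (sa t)"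

definition bwt_sel :: "'a::linorder list \<Rightarrow> 'a list \<Rightarrow> nat \<Rightarrow> nat \<Rightarrow> 'a" where
  "bwt_sel t0 t1 b k = (if b = 0 then bwt t0 else bwt t1) ! (k - 1)"

record 'a mstate =
  Zn   :: "nat \<Rightarrow> nat"       \<comment> \<open>Z^(h) being built (bits as 0/1)\<close>
  Bs   :: "nat \<Rightarrow> nat"
  Fs   :: "'a \<Rightarrow> nat"
  Bid  :: "'a \<Rightarrow> int"
  kk0  :: nat
  kk1  :: nat
  cid  :: int
  mlog :: "(nat \<times> 'a \<times> nat) list"  \<comment> \<open>(k, c, j) triples: at loop index k symbol c was read and Z[j] written\<close>

text \<open>One execution of the loop body for loop index k in iteration h,
  with Zold = Z^(h-1).\<close>
definition mstep :: "'a::linorder list \<Rightarrow> 'a list \<Rightarrow> 'a \<Rightarrow> 'a \<Rightarrow> nat \<Rightarrow> (nat \<Rightarrow> nat)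
    \<Rightarrow> 'a mstate \<Rightarrow> nat \<Rightarrow> 'a mstate" where
  "mstep t0 t1 d0 d1 h Zold st k =
    (let idv = (if Bs st k \<noteq> 0 \<and> Bs st k \<noteq> h then int k else cid st);
         b = Zold k;
         kb = (if b = 0 then kk0 st else kk1 st);
         c = bwt_sel t0 t1 b kb;
         k0' = (if b = 0 then kk0 st + 1 else kk0 st);
         k1' = (if b = 0 then kk1 st else kk1 st + 1);
         j = (if c \<notin> {d0, d1} then Fs st c else b + 1);
         F' = (if c \<notin> {d0, d1} then (Fs st)(c := Fs st c + 1) else Fs st);
         Z' = (Zn st)(j := b);
         Bid' = (if Bid st c \<noteq> idv then (Bid st)(c := idv) else Bid st);
         B' = (if Bid st c \<noteq> idv \<and> Bs st j = 0 then (Bs st)(j := h) else Bs st)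
     in \<lparr>Zn = Z', Bs = B', Fs = F', Bid = Bid', kk0 = k0', kk1 = k1', cid = idv,
         mlog = mlog st @ [(k, c, j)]\<rparr>)"

definition F_init :: "'a::linorder list \<Rightarrow> 'a list \<Rightarrow> 'a \<Rightarrow> nat" where
  "F_init t0 t1 c = 1 + length (filter (\<lambda>x. x < c) (bwt t0)) + length (filter (\<lambda>x. x < c) (bwt t1))"

text \<open>The initial contents of the new Z and the initial value of id are irrelevant
  (every position is written; id is compared only against Block_id values).\<close>
definition run_iter :: "'a::linorder list \<Rightarrow> 'a list \<Rightarrow> 'a \<Rightarrow> 'a \<Rightarrow> nat \<Rightarrow> (nat \<Rightarrow> nat)
    \<Rightarrow> (nat \<Rightarrow> nat) \<Rightarrow> 'a mstate" where
  "run_iter t0 t1 d0 d1 h Zold B =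
     foldl (mstep t0 t1 d0 d1 h Zold)
       \<lparr>Zn = (\<lambda>_. 0), Bs = B, Fs = F_init t0 t1, Bid = (\<lambda>_. -1), kk0 = 1, kk1 = 1,
        cid = 0, mlog = []\<rparr>
       [1..<length t0 + length t1 + 1]"

fun merge_state :: "'a::linorder list \<Rightarrow> 'a list \<Rightarrow> 'a \<Rightarrow> 'a \<Rightarrow> nat
    \<Rightarrow> (nat \<Rightarrow> nat) \<times> (nat \<Rightarrow> nat)" where
  "merge_state t0 t1 d0 d1 0 =
     ((\<lambda>i. if i \<le> length t0 then 0 else 1),
      (\<lambda>i. if i = 1 \<or> i = length t0 + length t1 + 1 then 1 else 0))"
| "merge_state t0 t1 d0 d1 (Suc h) =
     (let (Z, B) = merge_state t0 t1 d0 d1 h;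
          st = run_iter t0 t1 d0 d1 (Suc h) Z B
      in (Zn st, Bs st))"

definition Zh :: "'a::linorder list \<Rightarrow> 'a list \<Rightarrow> 'a \<Rightarrow> 'a \<Rightarrow> nat \<Rightarrow> nat \<Rightarrow> nat" where
  "Zh t0 t1 d0 d1 h = fst (merge_state t0 t1 d0 d1 h)"

definition Bh :: "'a::linorder list \<Rightarrow> 'a list \<Rightarrow> 'a \<Rightarrow> 'a \<Rightarrow> nat \<Rightarrow> nat \<Rightarrow> nat" where
  "Bh t0 t1 d0 d1 h = snd (merge_state t0 t1 d0 d1 h)"

definition iter_log :: "'a::linorder list \<Rightarrow> 'a list \<Rightarrow> 'a \<Rightarrow> 'a \<Rightarrow> nat \<Rightarrow> (nat \<times> 'a \<times> nat) list" where
  "iter_log t0 t1 d0 d1 h =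
     mlog (run_iter t0 t1 d0 d1 (Suc h) (Zh t0 t1 d0 d1 h) (Bh t0 t1 d0 d1 h))"

definition is_block :: "(nat \<Rightarrow> nat) \<Rightarrow> nat \<Rightarrow> nat \<Rightarrow> nat \<Rightarrow> bool" where
  "is_block B n l m \<longleftrightarrow> 1 \<le> l \<and> l \<le> m \<and> m \<le> n \<and> B l \<noteq> 0 \<and>
     (\<forall>i. l < i \<and> i \<le> m \<longrightarrow> B i = 0) \<and> B (m + 1) \<noteq> 0"

definition monochrome :: "(nat \<Rightarrow> nat) \<Rightarrow> nat \<Rightarrow> nat \<Rightarrow> bool" where
  "monochrome Z l m \<longleftrightarrow> (\<forall>i\<in>{l..m}. Z i = 0) \<or> (\<forall>i\<in>{l..m}. Z i = 1)"

definition valid_texts :: "'a::linorder list \<Rightarrow> 'a list \<Rightarrow> 'a \<Rightarrow> 'a \<Rightarrow> bool" where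
  "valid_texts t0 t1 d0 d1 \<longleftrightarrow>
     t0 \<noteq> [] \<and> t1 \<noteq> [] \<and> last t0 = d0 \<and> last t1 = d1 \<and> d0 < d1 \<and>
     d0 \<notin> set (butlast t0) \<and> d0 \<notin> set t1 \<and> d1 \<notin> set t0 \<and> d1 \<notin> set (butlast t1) \<and>
     (\<forall>x. x \<noteq> d0 \<and> x \<noteq> d1 \<longrightarrow> d1 < x)"

end

theory Submission
  imports Defs "HOL-Library.List_Lexorder" "HOL-Library.Product_Lexorder" "HOL-Library.Multiset"
begin

text \<open>
  Identify each BWT entry \<open>(b, r)\<close> with row \<open>r\<close> of the sorted rotations of \<open>t_b\<close>. Walking
  backwards along the LF mapping reads off the first \<open>h\<close> symbols of that row, and the
  invariant of the procedure is: after iteration \<open>h\<close>, \<open>Z\<close> lists the texts of all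
  entries sorted by these length-\<open>h\<close> prefixes (ties broken by text and row), and \<open>B[q] \<noteq> 0\<close>
  exactly where the prefix changes. One iteration preserves it because the counters \<open>F[c]\<close>
  realise the LF mapping and \<open>Block_id\<close> detects when two entries reading the same symbol come
  from different blocks.

  Hence a block is the set of entries sharing a length-\<open>h\<close> prefix \<open>w\<close>. Later iterations
  only refine the order within equal prefixes, so a monochrome block keeps its colours; and the
  cells written from the block while reading \<open>c\<close> are exactly the entries with prefix \<open>c w\<close>,
  which form a block of the next iteration and inherit the block's colour.
\<close>

lemma card_Suc_filter:
  "card {i \<in> {1..Suc k}. P i} = card {i \<in> {1..k}. P i} + (if P (Suc k) then 1 else 0)"
proof -
  have "{i \<in> {1..Suc k}. P i} = {i \<in> {1..k}. P i} \<union> (if P (Suc k) then {Suc k} else {})"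
    by (auto simp: le_Suc_eq)
  then show ?thesis by (simp add: card_Un_disjoint)
qed

lemma card_filter_nth:
  "card {r \<in> {1..length xs}. P (xs ! (r - 1))} = length (filter P xs)"
proof -
  have "{r \<in> {1..length xs}. P (xs ! (r - 1))} = Suc ` {i. i < length xs \<and> P (xs ! i)}"
  proof (rule set_eqI, rule iffI)
    fix r assume "r \<in> {r \<in> {1..length xs}. P (xs ! (r - 1))}"
    then show "r \<in> Suc ` {i. i < length xs \<and> P (xs ! i)}"
      by (intro image_eqI[of _ _ "r - 1"]) auto
  qed auto
  then show ?thesis by (simp add: card_image length_filter_conv_card)
qed

lemma rank_less:
  fixes k :: "'b \<Rightarrow> 'c::linorder"
  assumes "finite S" "x \<in> S" "y \<in> S" "k x < k y"
  shows "card {z \<in> S. k z < k x} < card {z \<in> S. k z < k y}"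
  using assms by (intro psubset_card_mono) (auto intro: less_trans)

lemma rank_less_iff:
  fixes k :: "'b \<Rightarrow> 'c::linorder"
  assumes "finite S" "inj_on k S" "x \<in> S" "y \<in> S"
  shows "card {z \<in> S. k z < k x} < card {z \<in> S. k z < k y} \<longleftrightarrow> k x < k y"
  using rank_less[where k=k, OF assms(1,3,4)] rank_less[where k=k, OF assms(1,4,3)] inj_onD[OF assms(2) _ assms(3,4)]
  by (cases "k x < k y"; cases "k y < k x") auto

lemma rank_bij:
  fixes k :: "'b \<Rightarrow> 'c::linorder"
  assumes fin: "finite S" and inj: "inj_on k S"
  shows "bij_betw (\<lambda>x. 1 + card {z \<in> S. k z < k x}) S {1..card S}"
proof -
  let ?r = "\<lambda>x. 1 + card {z \<in> S. k z < k x}"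
  have inj_r: "inj_on ?r S"
  proof (rule inj_onI)
    fix x y assume xy: "x \<in> S" "y \<in> S" "?r x = ?r y"
    then have "\<not> k x < k y" "\<not> k y < k x"
      using rank_less_iff[OF fin inj xy(1,2)] rank_less_iff[OF fin inj xy(2,1)] by simp_all
    then show "x = y" using inj_onD[OF inj _ xy(1,2)] by auto
  qed
  have "?r ` S \<subseteq> {1..card S}"
  proof
    fix u assume "u \<in> ?r ` S"
    then obtain x where x: "x \<in> S" "u = ?r x" by auto
    have "card {z \<in> S. k z < k x} \<le> card (S - {x})"
      using fin by (intro card_mono) auto
    moreover have "card S > 0" using x fin card_gt_0_iff by blast
    ultimately show "u \<in> {1..card S}" using x fin by auto
  qed
  moreover have "card (?r ` S) = card {1..card S}" using card_image[OF inj_r] by simp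
  ultimately have "?r ` S = {1..card S}" by (intro card_subset_eq) auto
  then show ?thesis using inj_r by (simp add: bij_betw_def)
qed

lemma mono_step_change_iff:
  fixes f :: "nat \<Rightarrow> 'b::order"
  assumes mono: "\<And>p p'. a \<le> p \<Longrightarrow> p \<le> p' \<Longrightarrow> p' \<le> b \<Longrightarrow> f p \<le> f p'" and "a \<le> b"
  shows "(\<exists>p\<in>{a<..b}. f (p - 1) \<noteq> f p) \<longleftrightarrow> f a \<noteq> f b"
proof
  assume "\<exists>p\<in>{a<..b}. f (p - 1) \<noteq> f p"
  then obtain p where p: "a < p" "p \<le> b" "f (p - 1) \<noteq> f p" by auto
  have "f a \<le> f (p - 1)" "f (p - 1) \<le> f p" "f p \<le> f b" using p by (auto intro!: mono)
  then show "f a \<noteq> f b" using p(3) by (metis order_antisym order_trans)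
next
  show "f a \<noteq> f b \<Longrightarrow> \<exists>p\<in>{a<..b}. f (p - 1) \<noteq> f p"
    using \<open>a \<le> b\<close>
  proof (induction b)
    case (Suc b)
    show ?case
    proof (cases "f b = f (Suc b)")
      case True
      with Suc.prems have "a \<le> b" by (auto simp: le_Suc_eq)
      then obtain p where "p \<in> {a<..b}" "f (p - 1) \<noteq> f p" using Suc True by auto
      then show ?thesis by auto
    next
      case False
      moreover have "a \<noteq> Suc b" using Suc.prems by auto
      ultimately show ?thesis using Suc.prems by (intro bexI[of _ "Suc b"]) auto
    qed
  qed simp
qed
section \<open>The BWT is a permutation of the text\<close>

lemma lexordp_iff_less: "ord_class.lexordp xs ys \<longleftrightarrow> xs < (ys::'a::linorder list)"
  by (simp add: lexordp_conv_lexord list_less_def)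

lemma inj_on_suffix_at: "inj_on (suffix_at t) {1..length t}"
proof (rule inj_onI)
  fix i j assume "i \<in> {1..length t}" "j \<in> {1..length t}" "suffix_at t i = suffix_at t j"
  then have "length (suffix_at t i) = length (suffix_at t j)" "i \<ge> 1" "j \<ge> 1" "i \<le> length t" "j \<le> length t"
    by auto
  then show "i = j" by (simp add: suffix_at_def)
qed

text \<open>Suffixes are pairwise distinct, so sorting them yields the unique suffix array.\<close>
lemma is_suffix_array_sa:
  fixes t :: "'a::linorder list"
  shows "is_suffix_array t (sa t)"
proof -
  define n where "n = length t"
  define f where "f = suffix_at t"
  have inj: "inj_on f {1..n}" using inj_on_suffix_at unfolding f_def n_def .
  define L where "L = sorted_list_of_set (f ` {1..n})"
  define s0 where "s0 = map (inv_into {1..n} f) L"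
  have set_L: "set L = f ` {1..n}" unfolding L_def by simp
  have sorted_L: "sorted_wrt (<) L" unfolding L_def by simp
  have map_s0: "map f s0 = L" unfolding s0_def map_map
    by (rule map_idI) (metis comp_apply f_inv_into_f set_L)
  have set_s0: "set s0 = {1..n}" unfolding s0_def using set_L inj by simp
  have "length s0 = n"
    using card_image[OF inj] unfolding s0_def L_def by simp
  have sorted_iff: "sorted_wrt (\<lambda>i j. ord_class.lexordp (suffix_at t i) (suffix_at t j)) s
            \<longleftrightarrow> sorted_wrt (<) (map f s)" for s
    by (simp add: sorted_wrt_map lexordp_iff_less f_def)
  have "is_suffix_array t s0"
    unfolding is_suffix_array_def using \<open>length s0 = n\<close> set_s0 sorted_L map_s0 sorted_iff n_def by simp
  moreover have "s = s0" if "is_suffix_array t s" for s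
  proof -
    have "sorted_wrt (<) (map f s)" "set s = {1..n}"
      using that sorted_iff unfolding is_suffix_array_def n_def by auto
    then have "map f s = map f s0"
      using strict_sorted_equal[of L "map f s"] sorted_L map_s0 set_L by simp
    then show ?thesis using map_inj_on[of f s s0] inj \<open>set s = {1..n}\<close> set_s0 by simp
  qed
  ultimately show ?thesis unfolding sa_def by (rule theI)
qed

lemma length_sa: "length (sa t) = length t"
  and set_sa: "set (sa t) = {1..length t}"
  and distinct_sa: "distinct (sa t)"
proof -
  show "length (sa t) = length t" "set (sa t) = {1..length t}"
    using is_suffix_array_sa[of t] unfolding is_suffix_array_def by auto
  then show "distinct (sa t)" by (simp add: card_distinct)
qed

lemma length_bwt [simp]: "length (bwt t) = length t"
  by (simp add: bwt_def length_sa)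

lemma mset_bwt:
  fixes t :: "'a::linorder list"
  assumes "t \<noteq> []"
  shows "mset (bwt t) = mset t"
proof -
  define n where "n = length t"
  define g where "g = (\<lambda>p. if p > 1 then t ! (p - 2) else t ! (length t - 1))"
  have "mset (sa t) = mset [1..<Suc n]"
  proof -
    have "set (sa t) = set [1..<Suc n]"
      using set_sa[of t] by (simp only: set_upt atLeastLessThanSuc_atLeastAtMost n_def)
    then show ?thesis using distinct_sa[of t] set_eq_iff_mset_eq_distinct by (metis distinct_upt)
  qed
  then have "mset (bwt t) = mset (map g [1..<Suc n])"
    by (simp add: bwt_def g_def)
  also have "map g [1..<Suc n] = last t # butlast t"
  proof -
    have "[1..<Suc n] = 1 # [2..<Suc n]"
      using assms upt_conv_Cons[of 1 "Suc n"] by (simp add: numeral_2_eq_2 n_def)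
    moreover have "map g [2..<Suc n] = butlast t"
      by (rule nth_equalityI) (auto simp: g_def n_def nth_butlast simp del: upt_Suc)
    moreover have "g 1 = last t" using assms by (simp add: g_def last_conv_nth)
    ultimately show ?thesis by simp
  qed
  also have "mset (last t # butlast t) = mset t"
    by (subst (2) append_butlast_last_id[OF assms, symmetric]) simp
  finally show ?thesis .
qed
section \<open>The LF mapping of a list\<close>

text \<open>\<open>LF w r\<close> is the position of the \<open>r\<close>-th entry (1-based) of \<open>w\<close> after stably sorting \<open>w\<close>.\<close>
definition LF :: "'a::linorder list \<Rightarrow> nat \<Rightarrow> nat" where
  "LF w r = card {r' \<in> {1..length w}. w ! (r' - 1) < w ! (r - 1)} +
            card {r' \<in> {1..r}. w ! (r' - 1) = w ! (r - 1)}"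

lemma LF_le_card_le:
  assumes "r \<in> {1..length w}"
  shows "LF w r \<le> card {r' \<in> {1..length w}. w ! (r' - 1) \<le> w ! (r - 1)}"
proof -
  let ?lt = "{r' \<in> {1..length w}. w ! (r' - 1) < w ! (r - 1)}"
  let ?eq = "{r' \<in> {1..length w}. w ! (r' - 1) = w ! (r - 1)}"
  have "card {r' \<in> {1..r}. w ! (r' - 1) = w ! (r - 1)} \<le> card ?eq"
    using assms by (intro card_mono) auto
  then have "LF w r \<le> card ?lt + card ?eq" unfolding LF_def by simp
  also have "\<dots> = card (?lt \<union> ?eq)" by (rule card_Un_disjoint[symmetric]) auto
  also have "?lt \<union> ?eq = {r' \<in> {1..length w}. w ! (r' - 1) \<le> w ! (r - 1)}" by auto
  finally show ?thesis .
qed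

lemma card_less_less_LF:
  assumes "r \<in> {1..length w}"
  shows "card {r' \<in> {1..length w}. w ! (r' - 1) < w ! (r - 1)} < LF w r"
proof -
  have "r \<in> {r' \<in> {1..r}. w ! (r' - 1) = w ! (r - 1)}" using assms by auto
  then have "card {r' \<in> {1..r}. w ! (r' - 1) = w ! (r - 1)} > 0" by (auto simp: card_gt_0_iff)
  then show ?thesis unfolding LF_def by simp
qed

lemma LF_less:
  assumes r: "r \<in> {1..length w}" and r': "r' \<in> {1..length w}"
    and lt: "w ! (r - 1) < w ! (r' - 1) \<or> w ! (r - 1) = w ! (r' - 1) \<and> r < r'"
  shows "LF w r < LF w r'"
  using lt
proof
  assume "w ! (r - 1) < w ! (r' - 1)"
  then have "card {r'' \<in> {1..length w}. w ! (r'' - 1) \<le> w ! (r - 1)}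
      \<le> card {r'' \<in> {1..length w}. w ! (r'' - 1) < w ! (r' - 1)}"
    by (intro card_mono) auto
  then show ?thesis using LF_le_card_le[OF r] card_less_less_LF[OF r'] by linarith
next
  assume lt2: "w ! (r - 1) = w ! (r' - 1) \<and> r < r'"
  have "{r'' \<in> {1..r}. w ! (r'' - 1) = w ! (r - 1)} \<subseteq> {r'' \<in> {1..r'}. w ! (r'' - 1) = w ! (r' - 1)}"
    and "r' \<in> {r'' \<in> {1..r'}. w ! (r'' - 1) = w ! (r' - 1)} - {r'' \<in> {1..r}. w ! (r'' - 1) = w ! (r - 1)}"
    using lt2 r' by auto
  then have "{r'' \<in> {1..r}. w ! (r'' - 1) = w ! (r - 1)} \<subset> {r'' \<in> {1..r'}. w ! (r'' - 1) = w ! (r' - 1)}"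
    by blast
  then have "card {r'' \<in> {1..r}. w ! (r'' - 1) = w ! (r - 1)} < card {r'' \<in> {1..r'}. w ! (r'' - 1) = w ! (r' - 1)}"
    by (intro psubset_card_mono) auto
  then show ?thesis using lt2 unfolding LF_def by simp
qed

lemma LF_range:
  assumes r: "r \<in> {1..length w}"
  shows "LF w r \<in> {1..length w}"
proof -
  have "card {r' \<in> {1..length w}. w ! (r' - 1) \<le> w ! (r - 1)} \<le> card {1..length w}"
    by (intro card_mono) auto
  then show ?thesis using LF_le_card_le[OF r] card_less_less_LF[OF r] by simp
qed

lemma LF_less_iff:
  assumes r: "r \<in> {1..length w}" and r': "r' \<in> {1..length w}"
  shows "LF w r < LF w r' \<longleftrightarrow> (w ! (r - 1) < w ! (r' - 1) \<or> w ! (r - 1) = w ! (r' - 1) \<and> r < r')"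
proof
  assume l: "LF w r < LF w r'"
  show "w ! (r - 1) < w ! (r' - 1) \<or> w ! (r - 1) = w ! (r' - 1) \<and> r < r'"
  proof (rule ccontr)
    assume "\<not> ?thesis"
    then have "w ! (r' - 1) < w ! (r - 1) \<or> w ! (r' - 1) = w ! (r - 1) \<and> r' < r \<or> r = r'" by auto
    then show False
    proof (elim disjE)
      assume "r = r'" then show False using l by simp
    qed (use LF_less[OF r' r] l in auto)
  qed
qed (rule LF_less[OF r r'])

lemma inj_on_LF: "inj_on (LF w) {1..length w}"
proof (rule inj_onI)
  fix r r' assume a: "r \<in> {1..length w}" "r' \<in> {1..length w}" "LF w r = LF w r'"
  have "\<not> LF w r < LF w r'" "\<not> LF w r' < LF w r" using a(3) by simp_all
  then show "r = r'" using LF_less_iff[OF a(1,2)] LF_less_iff[OF a(2,1)] by auto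
qed

lemma bij_betw_LF: "bij_betw (LF w) {1..length w} {1..length w}"
proof -
  have sub: "LF w ` {1..length w} \<subseteq> {1..length w}" by (rule image_subsetI) (rule LF_range)
  have "card (LF w ` {1..length w}) = card {1..length w}" using card_image[OF inj_on_LF] by simp
  then have "LF w ` {1..length w} = {1..length w}" using sub by (intro card_subset_eq) auto
  then show ?thesis using inj_on_LF by (simp add: bij_betw_def)
qed

definition LF_inv :: "'a::linorder list \<Rightarrow> nat \<Rightarrow> nat" where
  "LF_inv w = inv_into {1..length w} (LF w)"

lemma LF_inv_LF: "r \<in> {1..length w} \<Longrightarrow> LF_inv w (LF w r) = r"
  unfolding LF_inv_def by (rule inv_into_f_f[OF inj_on_LF])

lemma LF_LF_inv: "y \<in> {1..length w} \<Longrightarrow> LF w (LF_inv w y) = y"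
  unfolding LF_inv_def using bij_betw_LF by (metis bij_betw_def f_inv_into_f)

lemma LF_inv_range: "y \<in> {1..length w} \<Longrightarrow> LF_inv w y \<in> {1..length w}"
  unfolding LF_inv_def using bij_betw_LF by (metis bij_betw_def inv_into_into)
section \<open>Entries of the two BWTs and their prefixes\<close>

lemma list_le_take:
  fixes xs ys :: "'a::linorder list"
  shows "length xs = length ys \<Longrightarrow> xs \<le> ys \<Longrightarrow> take h xs \<le> take h ys"
proof (induction xs arbitrary: ys h)
  case (Cons a xs) then show ?case
    by (cases ys; cases h) (auto simp: less_imp_le)
qed simp

locale merge_texts =
  fixes t0 t1 :: "'a::linorder list" and d0 d1 :: 'a
  assumes valid: "valid_texts t0 t1 d0 d1"
begin

definition N :: nat where "N = length t0 + length t1"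

definition bwt_of :: "nat \<Rightarrow> 'a list" where "bwt_of b = (if b = 0 then bwt t0 else bwt t1)"

definition entries :: "(nat \<times> nat) set" where
  "entries = {x. fst x < 2 \<and> snd x \<in> {1..length (bwt_of (fst x))}}"

definition sym :: "nat \<times> nat \<Rightarrow> 'a" where "sym x = bwt_of (fst x) ! (snd x - 1)"

definition lf :: "nat \<times> nat \<Rightarrow> nat \<times> nat" where "lf x = (fst x, LF (bwt_of (fst x)) (snd x))"

definition lf_inv :: "nat \<times> nat \<Rightarrow> nat \<times> nat" where
  "lf_inv x = (fst x, LF_inv (bwt_of (fst x)) (snd x))"

text \<open>\<open>pref h x\<close> is the length-\<open>h\<close> prefix of the (cyclic) suffix of row \<open>x\<close>, read off the BWT
  by walking backwards along \<open>lf\<close>.\<close>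
primrec pref :: "nat \<Rightarrow> nat \<times> nat \<Rightarrow> 'a list" where
  "pref 0 x = []"
| "pref (Suc h) x = sym (lf_inv x) # pref h (lf_inv x)"

lemma sym_eq_bwt_sel: "sym x = bwt_sel t0 t1 (fst x) (snd x)"
  by (simp add: sym_def bwt_of_def bwt_sel_def)

lemma length_bwt_of: "length (bwt_of 0) = length t0" "length (bwt_of 1) = length t1"
  by (simp_all add: bwt_of_def)

lemma entries_iff: "(b, r) \<in> entries \<longleftrightarrow> b < 2 \<and> r \<in> {1..length (bwt_of b)}"
  by (simp add: entries_def)

lemma fst_entry_less_2: "x \<in> entries \<Longrightarrow> fst x < 2"
  by (simp add: entries_def)

lemma entries_split:
  "entries = ({0} \<times> {1..length (bwt_of 0)}) \<union> ({1} \<times> {1..length (bwt_of 1)})"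
  by (auto simp: entries_def less_2_cases_iff)

lemma finite_entries [simp]: "finite entries"
  by (simp add: entries_split)

lemma card_entries: "card entries = N"
proof -
  have "card entries = card ({0::nat} \<times> {1..length (bwt_of 0)}) + card ({1::nat} \<times> {1..length (bwt_of 1)})"
    unfolding entries_split by (rule card_Un_disjoint) auto
  then show ?thesis by (simp add: N_def bwt_of_def card_cartesian_product)
qed

lemma card_entries_sym:
  "card {x \<in> entries. P (sym x)} = length (filter P (bwt_of 0)) + length (filter P (bwt_of 1))"
proof -
  let ?S = "\<lambda>b. {r \<in> {1..length (bwt_of b)}. P (bwt_of b ! (r - 1))}"
  have "{x \<in> entries. P (sym x)} = ({0} \<times> ?S 0) \<union> ({1} \<times> ?S 1)"
    by (auto simp: entries_split sym_def)
  then have "card {x \<in> entries. P (sym x)} = card ({0::nat} \<times> ?S 0) + card ({1::nat} \<times> ?S 1)"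
    by (simp only:) (rule card_Un_disjoint, auto)
  then show ?thesis by (simp only: card_cartesian_product card_filter_nth) simp
qed

lemma fst_lf [simp]: "fst (lf x) = fst x"
  by (simp add: lf_def)

lemma lf_in_entries: "x \<in> entries \<Longrightarrow> lf x \<in> entries"
  using LF_range by (cases x) (auto simp: lf_def entries_iff)

lemma lf_inv_lf: "x \<in> entries \<Longrightarrow> lf_inv (lf x) = x"
  by (cases x) (simp add: lf_def lf_inv_def LF_inv_LF entries_iff)

lemma inj_on_lf: "inj_on lf entries"
  by (metis inj_on_inverseI lf_inv_lf)

lemma bij_betw_lf: "bij_betw lf entries entries"
proof -
  have "lf ` entries \<subseteq> entries" using lf_in_entries by auto
  moreover have "card (lf ` entries) = card entries" using card_image[OF inj_on_lf] by simp
  ultimately have "lf ` entries = entries" by (intro card_subset_eq) auto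
  then show ?thesis using inj_on_lf by (simp add: bij_betw_def)
qed

lemma entry_eq_lf: "y \<in> entries \<Longrightarrow> \<exists>x\<in>entries. y = lf x"
  using bij_betw_lf by (metis bij_betw_imp_surj_on imageE)

lemma pref_Suc_lf: "x \<in> entries \<Longrightarrow> pref (Suc h) (lf x) = sym x # pref h x"
  by (simp add: lf_inv_lf)

lemma length_pref [simp]: "length (pref h x) = h"
  by (induction h arbitrary: x) auto

lemma take_pref: "h \<le> g \<Longrightarrow> take h (pref g x) = pref h x"
proof (induction h arbitrary: g x)
  case (Suc h)
  then show ?case by (cases g) auto
qed simp

text \<open>Within one BWT, the prefixes of the rows are sorted: this is the sortedness of the
  suffix array, recovered from \<open>LF\<close> alone.\<close>
lemma pref_mono:
  "(b, r) \<in> entries \<Longrightarrow> (b, r') \<in> entries \<Longrightarrow> r \<le> r' \<Longrightarrow> pref h (b, r) \<le> pref h (b, r')"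
proof (induction h arbitrary: r r')
  case (Suc h)
  show ?case
  proof (cases "r = r'")
    case False
    then have "r < r'" using Suc.prems by simp
    define w where "w = bwt_of b"
    define s where "s = LF_inv w r"
    define s' where "s' = LF_inv w r'"
    have rows: "r \<in> {1..length w}" "r' \<in> {1..length w}" "b < 2"
      using Suc.prems by (auto simp: entries_iff w_def)
    have s_rows: "s \<in> {1..length w}" "s' \<in> {1..length w}"
      using LF_inv_range rows unfolding s_def s'_def by auto
    have "LF w s = r" "LF w s' = r'" using LF_LF_inv rows unfolding s_def s'_def by auto
    then have "w ! (s - 1) < w ! (s' - 1) \<or> w ! (s - 1) = w ! (s' - 1) \<and> s < s'"
      using LF_less_iff[OF s_rows] \<open>r < r'\<close> by simp
    moreover have "pref (Suc h) (b, r) = w ! (s - 1) # pref h (b, s)"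
      "pref (Suc h) (b, r') = w ! (s' - 1) # pref h (b, s')"
      by (simp_all add: lf_inv_def sym_def s_def s'_def w_def)
    moreover have "(b, s) \<in> entries" "(b, s') \<in> entries"
      using s_rows rows by (auto simp: entries_iff w_def)
    ultimately show ?thesis using Suc.IH by auto
  qed simp
qed simp

text \<open>\<open>pos h x\<close> turns out to be the position of entry \<open>x\<close> in \<open>Z\<close> after iteration \<open>h\<close>.\<close>
definition key :: "nat \<Rightarrow> nat \<times> nat \<Rightarrow> 'a list \<times> nat \<times> nat" where
  "key h x = (pref h x, fst x, snd x)"

definition pos :: "nat \<Rightarrow> nat \<times> nat \<Rightarrow> nat" where
  "pos h x = 1 + card {z \<in> entries. key h z < key h x}"

definition entry_at :: "nat \<Rightarrow> nat \<Rightarrow> nat \<times> nat" where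
  "entry_at h p = inv_into entries (pos h) p"

lemma inj_key: "inj_on (key h) S"
  by (rule inj_onI) (auto simp: key_def prod_eq_iff)

lemma bij_betw_pos: "bij_betw (pos h) entries {1..N}"
  using rank_bij[OF finite_entries inj_key[of h]] unfolding pos_def card_entries .

lemma pos_range: "x \<in> entries \<Longrightarrow> pos h x \<in> {1..N}"
  using bij_betw_pos by (metis bij_betwE)

lemma inj_on_pos: "inj_on (pos h) entries"
  using bij_betw_pos bij_betw_def by blast

lemma pos_less_iff: "x \<in> entries \<Longrightarrow> y \<in> entries \<Longrightarrow> pos h x < pos h y \<longleftrightarrow> key h x < key h y"
  unfolding pos_def using rank_less_iff[OF finite_entries inj_key] by simp

lemma pos_le_iff: "x \<in> entries \<Longrightarrow> y \<in> entries \<Longrightarrow> pos h x \<le> pos h y \<longleftrightarrow> key h x \<le> key h y"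
  using pos_less_iff[of y x h] by (simp add: not_less[symmetric])

lemma entry_at_in_entries: "p \<in> {1..N} \<Longrightarrow> entry_at h p \<in> entries"
  unfolding entry_at_def using bij_betw_pos by (metis bij_betw_def inv_into_into)

lemma pos_entry_at: "p \<in> {1..N} \<Longrightarrow> pos h (entry_at h p) = p"
  unfolding entry_at_def using bij_betw_pos by (metis bij_betw_def f_inv_into_f)

lemma entry_at_pos: "x \<in> entries \<Longrightarrow> entry_at h (pos h x) = x"
  unfolding entry_at_def using inj_on_pos by (rule inv_into_f_f)

lemma bij_betw_entry_at: "bij_betw (entry_at h) {1..N} entries"
  unfolding entry_at_def using bij_betw_pos by (rule bij_betw_inv_into)

lemma pref_entry_at_mono:
  assumes "h \<le> g" "p \<le> p'" "p \<in> {1..N}" "p' \<in> {1..N}"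
  shows "pref h (entry_at g p) \<le> pref h (entry_at g p')"
proof -
  have "key g (entry_at g p) \<le> key g (entry_at g p')"
    using assms pos_le_iff[OF entry_at_in_entries entry_at_in_entries] pos_entry_at by metis
  then have "pref g (entry_at g p) \<le> pref g (entry_at g p')"
    by (auto simp: key_def)
  then have "take h (pref g (entry_at g p)) \<le> take h (pref g (entry_at g p'))"
    by (intro list_le_take) auto
  then show ?thesis using take_pref[OF assms(1)] by simp
qed

text \<open>Both sides list the same multiset of prefixes, each in sorted order.\<close>
lemma pref_entry_at_refine:
  assumes "h \<le> g" and p: "p \<in> {1..N}"
  shows "pref h (entry_at g p) = pref h (entry_at h p)"
proof -
  define X where "X = (\<lambda>g. map (\<lambda>p. pref h (entry_at g p)) [1..<Suc N])"
  have sorted_X: "sorted (X g')" if "h \<le> g'" for g'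
    unfolding sorted_iff_nth_mono
    using pref_entry_at_mono[OF that] by (auto simp: X_def nth_Cons' simp del: upt_Suc)
  have mset_X: "mset (X g') = image_mset (pref h) (mset_set entries)" for g'
  proof -
    have "mset (X g') = image_mset (\<lambda>p. pref h (entry_at g' p)) (mset [1..<Suc N])"
      unfolding X_def by simp
    also have "mset [1..<Suc N] = mset_set {1..N}"
      by (metis atLeastLessThanSuc_atLeastAtMost distinct_upt mset_set_set set_upt)
    also have "image_mset (\<lambda>p. pref h (entry_at g' p)) (mset_set {1..N})
        = image_mset (pref h) (image_mset (entry_at g') (mset_set {1..N}))"
      by (simp add: multiset.map_comp comp_def)
    also have "image_mset (entry_at g') (mset_set {1..N}) = mset_set entries"
      using bij_betw_entry_at by (metis bij_betw_def image_mset_mset_set)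
    finally show ?thesis .
  qed
  have "X g = X h"
    using properties_for_sort[of "X g" "X h"] mset_X sorted_X[OF assms(1)] sorted_X[of h]
    by (simp add: sorted_sort_id)
  moreover have "p - 1 < N" "[1..<Suc N] ! (p - 1) = p" using p by (auto simp del: upt_Suc)
  ultimately show ?thesis unfolding X_def by (metis length_map length_upt diff_Suc_1 nth_map)
qed

end

section \<open>The sentinels\<close>

context merge_texts
begin

lemma valid_textsD:
  "t0 \<noteq> []" "t1 \<noteq> []" "last t0 = d0" "last t1 = d1" "d0 < d1"
  "d0 \<notin> set (butlast t0)" "d0 \<notin> set t1" "d1 \<notin> set t0" "d1 \<notin> set (butlast t1)"
  "\<And>x. x \<noteq> d0 \<Longrightarrow> x \<noteq> d1 \<Longrightarrow> d1 < x"
  using valid unfolding valid_texts_def by auto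

lemma mset_bwt_of: "mset (bwt_of 0) = mset t0" "mset (bwt_of 1) = mset t1"
  using mset_bwt valid_textsD(1,2) by (auto simp: bwt_of_def)

lemma length_filter_bwt_of:
  "length (filter P (bwt_of 0)) = length (filter P t0)"
  "length (filter P (bwt_of 1)) = length (filter P t1)"
  by (metis mset_bwt_of mset_filter size_mset)+

lemma count_d0: "length (filter (\<lambda>x. x = d0) t0) = 1" "length (filter (\<lambda>x. x = d0) t1) = 0"
proof -
  have "filter (\<lambda>x. x = d0) (butlast t0) = []" using valid_textsD(6) by (auto simp: filter_empty_conv)
  then show "length (filter (\<lambda>x. x = d0) t0) = 1"
    by (subst append_butlast_last_id[OF valid_textsD(1), symmetric]) (simp add: valid_textsD(3))
  show "length (filter (\<lambda>x. x = d0) t1) = 0" using valid_textsD(7) by (auto simp: filter_empty_conv)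
qed

lemma count_d1: "length (filter (\<lambda>x. x = d1) t0) = 0" "length (filter (\<lambda>x. x = d1) t1) = 1"
proof -
  have "filter (\<lambda>x. x = d1) (butlast t1) = []" using valid_textsD(9) by (auto simp: filter_empty_conv)
  then show "length (filter (\<lambda>x. x = d1) t1) = 1"
    by (subst append_butlast_last_id[OF valid_textsD(2), symmetric]) (simp add: valid_textsD(4))
  show "length (filter (\<lambda>x. x = d1) t0) = 0" using valid_textsD(8) by (auto simp: filter_empty_conv)
qed

lemma sym_in_text: "x \<in> entries \<Longrightarrow> sym x \<in> set (if fst x = 0 then t0 else t1)"
proof -
  assume "x \<in> entries"
  then have "sym x \<in> set (bwt_of (fst x))" "fst x < 2" by (auto simp: entries_def sym_def)
  moreover have "set (bwt_of 0) = set t0" "set (bwt_of 1) = set t1"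
    by (metis mset_bwt_of set_mset_mset)+
  ultimately show ?thesis by (auto simp: less_2_cases_iff)
qed

lemma sym_d0_fst: "x \<in> entries \<Longrightarrow> sym x = d0 \<Longrightarrow> fst x = 0"
  using sym_in_text[of x] valid_textsD(7) by (auto split: if_splits)

lemma sym_d1_fst: "x \<in> entries \<Longrightarrow> sym x = d1 \<Longrightarrow> fst x = 1"
  using sym_in_text[of x] valid_textsD(8) fst_entry_less_2[of x] by (auto split: if_splits)

lemma card_sym_sentinel: "d \<in> {d0, d1} \<Longrightarrow> card {x \<in> entries. sym x = d} = 1"
  using card_entries_sym[of "\<lambda>x. x = d"] length_filter_bwt_of count_d0 count_d1 by auto

lemma F_init_eq_card: "F_init t0 t1 c = 1 + card {x \<in> entries. sym x < c}"
  using card_entries_sym[of "\<lambda>x. x < c"] by (simp add: F_init_def bwt_of_def)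

text \<open>The sentinel rule \<open>j := b + 1\<close> of the procedure agrees with the general rule \<open>j := F[c]\<close>.\<close>
lemma F_init_sentinel: "x \<in> entries \<Longrightarrow> sym x \<in> {d0, d1} \<Longrightarrow> F_init t0 t1 (sym x) = fst x + 1"
proof -
  have "(\<lambda>x. x < d0) = (\<lambda>_. False)"
    using valid_textsD(5,10) by (auto intro!: ext) (metis less_asym less_trans)
  moreover have "(\<lambda>x. x < d1) = (\<lambda>x. x = d0)"
    using valid_textsD(5,10) by (auto intro!: ext) (metis less_asym)
  ultimately have "F_init t0 t1 d0 = 1" "F_init t0 t1 d1 = 2"
    unfolding F_init_def using length_filter_bwt_of count_d0 by (simp_all add: bwt_of_def)
  then show "x \<in> entries \<Longrightarrow> sym x \<in> {d0, d1} \<Longrightarrow> ?thesis"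
    using sym_d0_fst[of x] sym_d1_fst[of x] by auto
qed

end

context merge_texts
begin

text \<open>Closed forms for the quantities of one iteration run on the colour vector \<open>Z\<close> and the
  array \<open>B\<close>: at loop index \<open>k\<close> the procedure reads row \<open>read_row Z k\<close> of \<open>bwt_(Z k)\<close>, obtaining
  \<open>read_sym Z k\<close>, and writes to \<open>write_pos Z k\<close>; \<open>current_id\<close> is the variable \<open>id\<close> and
  \<open>last_id Z B H c k\<close> is \<open>Block_id[c]\<close> after step \<open>k\<close>.\<close>
definition read_row :: "(nat \<Rightarrow> nat) \<Rightarrow> nat \<Rightarrow> nat" where
  "read_row Z k = card {i \<in> {1..k}. (Z i = 0) = (Z k = 0)}"

definition read_sym :: "(nat \<Rightarrow> nat) \<Rightarrow> nat \<Rightarrow> 'a" where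
  "read_sym Z k = bwt_sel t0 t1 (Z k) (read_row Z k)"

definition count_read :: "(nat \<Rightarrow> nat) \<Rightarrow> 'a \<Rightarrow> nat \<Rightarrow> nat" where
  "count_read Z c k = card {i \<in> {1..k}. read_sym Z i = c}"

definition write_pos :: "(nat \<Rightarrow> nat) \<Rightarrow> nat \<Rightarrow> nat" where
  "write_pos Z k = (if read_sym Z k \<notin> {d0, d1}
     then F_init t0 t1 (read_sym Z k) + count_read Z (read_sym Z k) (k - 1) else Z k + 1)"

primrec current_id :: "(nat \<Rightarrow> nat) \<Rightarrow> nat \<Rightarrow> nat \<Rightarrow> int" where
  "current_id B H 0 = 0"
| "current_id B H (Suc k) = (if B (Suc k) \<noteq> 0 \<and> B (Suc k) \<noteq> H then int (Suc k) else current_id B H k)"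

primrec last_id :: "(nat \<Rightarrow> nat) \<Rightarrow> (nat \<Rightarrow> nat) \<Rightarrow> nat \<Rightarrow> 'a \<Rightarrow> nat \<Rightarrow> int" where
  "last_id Z B H c 0 = -1"
| "last_id Z B H c (Suc k) = (if read_sym Z (Suc k) = c then current_id B H (Suc k) else last_id Z B H c k)"

definition init_state :: "(nat \<Rightarrow> nat) \<Rightarrow> 'a mstate" where
  "init_state B = \<lparr>Zn = (\<lambda>_. 0), Bs = B, Fs = F_init t0 t1, Bid = (\<lambda>_. -1), kk0 = 1, kk1 = 1,
        cid = 0, mlog = []\<rparr>"

definition state_after :: "(nat \<Rightarrow> nat) \<Rightarrow> (nat \<Rightarrow> nat) \<Rightarrow> nat \<Rightarrow> nat \<Rightarrow> 'a mstate" where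
  "state_after Z B H k = foldl (mstep t0 t1 d0 d1 H Z) (init_state B) [1..<Suc k]"

lemma run_iter_eq_state_after: "run_iter t0 t1 d0 d1 H Z B = state_after Z B H N"
  by (simp add: run_iter_def state_after_def init_state_def N_def)

lemma state_after_0: "state_after Z B H 0 = init_state B"
  by (simp add: state_after_def)

lemma state_after_Suc: "state_after Z B H (Suc k) = mstep t0 t1 d0 d1 H Z (state_after Z B H k) (Suc k)"
  by (simp add: state_after_def)

lemma read_row_Suc: "read_row Z (Suc k) = 1 + card {i \<in> {1..k}. (Z i = 0) = (Z (Suc k) = 0)}"
  unfolding read_row_def card_Suc_filter by simp

lemma count_read_Suc: "count_read Z c (Suc k) = count_read Z c k + (if read_sym Z (Suc k) = c then 1 else 0)"
  unfolding count_read_def by (rule card_Suc_filter)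

lemma current_id_nonneg: "current_id B H k \<ge> 0"
  by (induction k) auto

lemma current_id_le: "current_id B H k \<le> int k"
  by (induction k) auto

context
  fixes Z B :: "nat \<Rightarrow> nat" and H :: nat
begin

lemma Bs_state_after_cases: "Bs (state_after Z B H k) q = B q \<or> Bs (state_after Z B H k) q = H \<and> B q = 0"
  by (induction k) (auto simp: state_after_0 state_after_Suc init_state_def mstep_def Let_def)

lemma state_after_counters:
  assumes "H \<noteq> 0"
  shows "kk0 (state_after Z B H k) = 1 + card {i \<in> {1..k}. Z i = 0} \<and>
         kk1 (state_after Z B H k) = 1 + card {i \<in> {1..k}. Z i \<noteq> 0} \<and>
         (\<forall>c. Fs (state_after Z B H k) c =
            (if c \<in> {d0, d1} then F_init t0 t1 c else F_init t0 t1 c + count_read Z c k)) \<and>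
         cid (state_after Z B H k) = current_id B H k \<and>
         (\<forall>c. Bid (state_after Z B H k) c = last_id Z B H c k) \<and>
         mlog (state_after Z B H k) = map (\<lambda>i. (i, read_sym Z i, write_pos Z i)) [1..<Suc k]"
proof (induction k)
  case 0
  show ?case by (simp add: state_after_0 init_state_def count_read_def)
next
  case (Suc k)
  define s where "s = state_after Z B H k"
  have "(Bs s (Suc k) \<noteq> 0 \<and> Bs s (Suc k) \<noteq> H) \<longleftrightarrow> (B (Suc k) \<noteq> 0 \<and> B (Suc k) \<noteq> H)"
    using Bs_state_after_cases[of k "Suc k"] assms unfolding s_def by auto
  then have id: "(if Bs s (Suc k) \<noteq> 0 \<and> Bs s (Suc k) \<noteq> H then int (Suc k) else cid s)
      = current_id B H (Suc k)"
    using Suc.IH s_def by simp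
  have c: "bwt_sel t0 t1 (Z (Suc k)) (if Z (Suc k) = 0 then kk0 s else kk1 s) = read_sym Z (Suc k)"
    using Suc.IH s_def by (simp add: read_row_Suc read_sym_def)
  have step: "state_after Z B H (Suc k) = mstep t0 t1 d0 d1 H Z s (Suc k)"
    by (simp add: state_after_Suc s_def)
  show ?case
  proof (intro conjI allI)
    show "kk0 (state_after Z B H (Suc k)) = 1 + card {i \<in> {1..Suc k}. Z i = 0}"
      "kk1 (state_after Z B H (Suc k)) = 1 + card {i \<in> {1..Suc k}. Z i \<noteq> 0}"
      using Suc.IH unfolding step s_def card_Suc_filter by (simp_all add: mstep_def Let_def)
    show "cid (state_after Z B H (Suc k)) = current_id B H (Suc k)"
      using id unfolding step by (simp add: mstep_def Let_def)
    show "mlog (state_after Z B H (Suc k)) = map (\<lambda>i. (i, read_sym Z i, write_pos Z i)) [1..<Suc (Suc k)]"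
      using Suc.IH c unfolding step s_def by (auto simp: mstep_def Let_def write_pos_def)
    fix c'
    show "Fs (state_after Z B H (Suc k)) c' =
        (if c' \<in> {d0, d1} then F_init t0 t1 c' else F_init t0 t1 c' + count_read Z c' (Suc k))"
      using Suc.IH c unfolding step s_def by (auto simp: mstep_def Let_def count_read_Suc)
    show "Bid (state_after Z B H (Suc k)) c' = last_id Z B H c' (Suc k)"
      using Suc.IH c id unfolding step s_def by (auto simp: mstep_def Let_def)
  qed
qed

lemma state_after_Suc_fields:
  fixes k :: nat
  assumes "H \<noteq> 0"
  defines "s \<equiv> state_after Z B H k" and "j \<equiv> write_pos Z (Suc k)"
  shows "Zn (state_after Z B H (Suc k)) = (Zn s)(j := Z (Suc k))"
    and "Bs (state_after Z B H (Suc k)) =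
      (if last_id Z B H (read_sym Z (Suc k)) k \<noteq> current_id B H (Suc k) \<and> Bs s j = 0
       then (Bs s)(j := H) else Bs s)"
proof -
  note closed = state_after_counters[OF assms(1), of k] state_after_counters[OF assms(1), of "Suc k"]
  have c: "bwt_sel t0 t1 (Z (Suc k)) (if Z (Suc k) = 0 then kk0 s else kk1 s) = read_sym Z (Suc k)"
    using closed s_def by (simp add: read_row_Suc read_sym_def)
  have "(if read_sym Z (Suc k) \<notin> {d0, d1} then Fs s (read_sym Z (Suc k)) else Z (Suc k) + 1) = j"
    using closed s_def j_def by (simp add: write_pos_def)
  moreover have "cid (mstep t0 t1 d0 d1 H Z s (Suc k)) = current_id B H (Suc k)"
    using closed by (simp add: state_after_Suc s_def)
  ultimately show "Zn (state_after Z B H (Suc k)) = (Zn s)(j := Z (Suc k))"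
    and "Bs (state_after Z B H (Suc k)) = (if last_id Z B H (read_sym Z (Suc k)) k \<noteq> current_id B H (Suc k)
      \<and> Bs s j = 0 then (Bs s)(j := H) else Bs s)"
    using closed c unfolding state_after_Suc s_def[symmetric]
    by (auto simp: mstep_def Let_def s_def)
qed

text \<open>Distinct write positions guarantee that no step overwrites a cell written earlier in the
  same iteration.\<close>
lemma Zn_state_after:
  assumes "H \<noteq> 0" "inj_on (write_pos Z) {1..k}" "i \<in> {1..k}"
  shows "Zn (state_after Z B H k) (write_pos Z i) = Z i"
  using assms(2,3)
proof (induction k)
  case (Suc k)
  have "inj_on (write_pos Z) {1..k}" using Suc.prems(1) by (rule inj_on_subset) auto
  moreover have "i \<in> {1..k} \<Longrightarrow> write_pos Z i \<noteq> write_pos Z (Suc k)"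
    using Suc.prems(1) by (auto dest: inj_onD)
  ultimately show ?case
    using Suc state_after_Suc_fields(1)[OF assms(1)] by (cases "i = Suc k") auto
qed simp

lemma Bs_state_after:
  assumes "H \<noteq> 0" "inj_on (write_pos Z) {1..k}"
  shows "Bs (state_after Z B H k) q =
    (if B q = 0 \<and> (\<exists>i\<in>{1..k}. write_pos Z i = q \<and>
        last_id Z B H (read_sym Z i) (i - 1) \<noteq> current_id B H i) then H else B q)"
  using assms(2)
proof (induction k arbitrary: q)
  case 0
  show ?case by (simp add: state_after_0 init_state_def)
next
  case (Suc k)
  have inj: "inj_on (write_pos Z) {1..k}" using Suc.prems by (rule inj_on_subset) auto
  have fresh: "i \<in> {1..k} \<Longrightarrow> write_pos Z i \<noteq> write_pos Z (Suc k)" for i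
    using Suc.prems by (auto dest: inj_onD)
  have "(\<exists>i\<in>{1..Suc k}. write_pos Z i = q \<and> P i) \<longleftrightarrow>
      (\<exists>i\<in>{1..k}. write_pos Z i = q \<and> P i) \<or> write_pos Z (Suc k) = q \<and> P (Suc k)" for P
    by (auto simp: atLeastAtMostSuc_conv)
  then show ?case
    using Suc.IH[OF inj] fresh state_after_Suc_fields(2)[OF assms(1), of k]
    by (auto simp: fun_upd_def)
qed

end

lemma last_id_unread: "(\<forall>i\<in>{1..k}. read_sym Z i \<noteq> c) \<Longrightarrow> last_id Z B H c k = -1"
  by (induction k) auto

lemma last_id_eq:
  "k' \<in> {1..k} \<Longrightarrow> read_sym Z k' = c \<Longrightarrow> (\<forall>i\<in>{k'<..k}. read_sym Z i \<noteq> c) \<Longrightarrow>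
    last_id Z B H c k = current_id B H k'"
proof (induction k)
  case 0 then show ?case by simp
next
  case (Suc k)
  show ?case
  proof (cases "k' = Suc k")
    case True then show ?thesis using Suc.prems by simp
  next
    case False
    then have "k' \<in> {1..k}" using Suc.prems by auto
    moreover have "read_sym Z (Suc k) \<noteq> c" using Suc.prems False by auto
    ultimately show ?thesis using Suc by auto
  qed
qed

lemma current_id_change_iff:
  "k' \<le> k \<Longrightarrow>
    current_id B H k' \<noteq> current_id B H k \<longleftrightarrow> (\<exists>q\<in>{k'<..k}. B q \<noteq> 0 \<and> B q \<noteq> H)"
proof (induction k)
  case 0 then show ?case by simp
next
  case (Suc k)
  show ?case
  proof (cases "k' = Suc k")
    case True then show ?thesis by simp
  next
    case False
    then have kk: "k' \<le> k" using Suc.prems by simp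
    show ?thesis
    proof (cases "B (Suc k) \<noteq> 0 \<and> B (Suc k) \<noteq> H")
      case True
      have "current_id B H k' \<le> int k'" by (rule current_id_le)
      then have "current_id B H k' \<noteq> current_id B H (Suc k)" using True kk by simp
      moreover have "\<exists>q\<in>{k'<..Suc k}. B q \<noteq> 0 \<and> B q \<noteq> H" using True kk by (intro bexI[of _ "Suc k"]) auto
      ultimately show ?thesis by simp
    next
      case False
      then have "current_id B H (Suc k) = current_id B H k" by (simp only: current_id.simps if_False)
      moreover have "(\<exists>q\<in>{k'<..Suc k}. B q \<noteq> 0 \<and> B q \<noteq> H) \<longleftrightarrow> (\<exists>q\<in>{k'<..k}. B q \<noteq> 0 \<and> B q \<noteq> H)"
      proof
        assume "\<exists>q\<in>{k'<..Suc k}. B q \<noteq> 0 \<and> B q \<noteq> H"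
        then obtain q where q: "q \<in> {k'<..Suc k}" "B q \<noteq> 0" "B q \<noteq> H" by blast
        then have "q \<noteq> Suc k" using False by auto
        then have "q \<in> {k'<..k}" using q(1) by auto
        then show "\<exists>q\<in>{k'<..k}. B q \<noteq> 0 \<and> B q \<noteq> H" using q by blast
      qed auto
      ultimately show ?thesis using Suc.IH[OF kk] by simp
    qed
  qed
qed

end

context merge_texts
begin

lemma key_le_iff_same_text:
  assumes x: "x \<in> entries" and x': "x' \<in> entries" and "fst x' = fst x"
  shows "key h x' \<le> key h x \<longleftrightarrow> snd x' \<le> snd x"
proof -
  obtain b r r' where e: "x = (b, r)" "x' = (b, r')" using assms(3) by (metis prod.collapse)
  have "pref h x' \<le> pref h x" if "r' \<le> r" using pref_mono[of b r' r h] that x x' e by simp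
  moreover have "pref h x \<le> pref h x'" if "r \<le> r'" using pref_mono[of b r r' h] that x x' e by simp
  ultimately show ?thesis
    using e by (cases "r' \<le> r") (auto simp: key_def le_less)
qed

lemma key_Suc_lf:
  "x \<in> entries \<Longrightarrow> key (Suc h) (lf x) = (sym x # pref h x, fst x, LF (bwt_of (fst x)) (snd x))"
  unfolding key_def by (simp only: pref_Suc_lf) (simp add: lf_def)

lemma key_Suc_lf_less_iff:
  assumes x: "x \<in> entries" and x': "x' \<in> entries"
  shows "key (Suc h) (lf x') < key (Suc h) (lf x) \<longleftrightarrow>
    sym x' < sym x \<or> sym x' = sym x \<and> key h x' < key h x"
proof -
  have "LF (bwt_of (fst x)) (snd x') < LF (bwt_of (fst x)) (snd x) \<longleftrightarrow> snd x' < snd x"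
    if "sym x' = sym x" "fst x' = fst x"
    using LF_less_iff[of "snd x'" "bwt_of (fst x)" "snd x"] x x' that by (auto simp: entries_def sym_def)
  then show ?thesis
    unfolding key_Suc_lf[OF x] key_Suc_lf[OF x'] unfolding key_def less_prod_def' by auto
qed

lemma sym_le_if_key_Suc_lf_le:
  assumes "x \<in> entries" "x' \<in> entries" "key (Suc h) (lf x') \<le> key (Suc h) (lf x)"
  shows "sym x' \<le> sym x"
proof -
  have "pref (Suc h) (lf x') \<le> pref (Suc h) (lf x)" using assms(3) by (auto simp: key_def)
  then show ?thesis using pref_Suc_lf assms(1,2) by (auto simp: less_imp_le)
qed

text \<open>The right-hand side is the value of the counter \<open>F[sym x]\<close> when the procedure reaches \<open>x\<close>.\<close>
lemma pos_Suc_lf: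
  assumes x: "x \<in> entries"
  shows "pos (Suc h) (lf x) = F_init t0 t1 (sym x) + card {x' \<in> entries. sym x' = sym x \<and> key h x' < key h x}"
proof -
  define S where "S = {x' \<in> entries. key (Suc h) (lf x') < key (Suc h) (lf x)}"
  define A where "A = {x' \<in> entries. sym x' < sym x}"
  define B where "B = {x' \<in> entries. sym x' = sym x \<and> key h x' < key h x}"
  have smaller_eq: "{y \<in> entries. key (Suc h) y < key (Suc h) (lf x)} = lf ` S"
  proof (rule set_eqI, rule iffI)
    fix y assume y: "y \<in> {y \<in> entries. key (Suc h) y < key (Suc h) (lf x)}"
    then obtain x' where "x' \<in> entries" "y = lf x'" using entry_eq_lf by blast
    then show "y \<in> lf ` S" using y unfolding S_def by blast
  next
    fix y assume "y \<in> lf ` S"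
    then show "y \<in> {y \<in> entries. key (Suc h) y < key (Suc h) (lf x)}" unfolding S_def using lf_in_entries by blast
  qed
  have card_lf_S: "card (lf ` S) = card S"
    by (rule card_image) (rule inj_on_subset[OF inj_on_lf], simp add: S_def)
  have S_split: "S = A \<union> B"
    unfolding S_def A_def B_def using key_Suc_lf_less_iff[OF x] by blast
  have card_split: "card (A \<union> B) = card A + card B"
    by (rule card_Un_disjoint) (auto simp: A_def B_def)
  have "pos (Suc h) (lf x) = 1 + card S"
    unfolding pos_def smaller_eq card_lf_S by simp
  also have "\<dots> = 1 + card A + card B" using S_split card_split by simp
  finally have "pos (Suc h) (lf x) = 1 + card A + card B" .
  then show ?thesis unfolding F_init_eq_card A_def B_def by simp
qed

lemma key_entry_at_less:
  assumes "p < p'" "p \<in> {1..N}" "p' \<in> {1..N}"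
  shows "key g (entry_at g p) < key g (entry_at g p')"
  using assms pos_less_iff[OF entry_at_in_entries[OF assms(2)] entry_at_in_entries[OF assms(3)]]
    pos_entry_at by metis

lemma no_key_between:
  assumes "q \<in> {2..N}" "y \<in> entries"
  shows "\<not> (key g (entry_at g (q - 1)) < key g y \<and> key g y < key g (entry_at g q))"
proof
  assume between: "key g (entry_at g (q - 1)) < key g y \<and> key g y < key g (entry_at g q)"
  have q: "q - 1 \<in> {1..N}" "q \<in> {1..N}" using assms(1) by auto
  have "q - 1 < pos g y" "pos g y < q"
    using between pos_less_iff entry_at_in_entries[OF q(1)] entry_at_in_entries[OF q(2)] assms(2)
      pos_entry_at[OF q(1)] pos_entry_at[OF q(2)] by metis+
  then show False by simp
qed

section \<open>The invariant of the merging procedure\<close>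

abbreviation ZZ :: "nat \<Rightarrow> nat \<Rightarrow> nat" where "ZZ h \<equiv> Zh t0 t1 d0 d1 h"
abbreviation BB :: "nat \<Rightarrow> nat \<Rightarrow> nat" where "BB h \<equiv> Bh t0 t1 d0 d1 h"

lemma merge_state_eq: "merge_state t0 t1 d0 d1 h = (ZZ h, BB h)"
  by (simp add: Zh_def Bh_def)

lemma Zh_Suc: "ZZ (Suc h) = Zn (state_after (ZZ h) (BB h) (Suc h) N)"
  by (simp add: Zh_def[of _ _ _ _ "Suc h"] merge_state_eq run_iter_eq_state_after Let_def)

lemma Bh_Suc: "BB (Suc h) = Bs (state_after (ZZ h) (BB h) (Suc h) N)"
  by (simp add: Bh_def[of _ _ _ _ "Suc h"] merge_state_eq run_iter_eq_state_after Let_def)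

lemma iter_log_eq: "iter_log t0 t1 d0 d1 h = mlog (state_after (ZZ h) (BB h) (Suc h) N)"
  by (simp add: iter_log_def run_iter_eq_state_after)

definition merge_inv :: "nat \<Rightarrow> bool" where
  "merge_inv h \<longleftrightarrow> (\<forall>x\<in>entries. ZZ h (pos h x) = fst x) \<and> BB h 1 \<noteq> 0 \<and> BB h (Suc N) \<noteq> 0 \<and>
     (\<forall>q\<in>{2..N}. BB h q \<le> h \<and> (BB h q \<noteq> 0 \<longleftrightarrow> pref h (entry_at h (q - 1)) \<noteq> pref h (entry_at h q)))"

lemma merge_inv_0: "merge_inv 0"
proof -
  have Z0: "ZZ 0 p = (if p \<le> length t0 then 0 else 1)" for p by (simp add: Zh_def)
  have B0: "BB 0 p = (if p = 1 \<or> p = N + 1 then 1 else 0)" for p by (simp add: Bh_def N_def)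
  have "ZZ 0 (pos 0 x) = fst x" if x: "x \<in> entries" for x
  proof (cases "fst x = 0")
    case True
    have "{z \<in> entries. key 0 z < key 0 x} \<subseteq> {0} \<times> {1..<snd x}"
      using True x by (auto simp: key_def entries_def less_prod_def' less_2_cases_iff)
    then have "card {z \<in> entries. key 0 z < key 0 x} \<le> card ({0::nat} \<times> {1..<snd x})" by (intro card_mono) auto
    moreover have "snd x \<ge> 1" using x by (simp add: entries_def)
    ultimately have "pos 0 x \<le> snd x" unfolding pos_def by (simp add: card_cartesian_product)
    moreover have "snd x \<le> length t0" using x True length_bwt_of(1) by (auto simp: entries_def)
    ultimately show ?thesis using True Z0 by simp
  next
    case False
    then have f1: "fst x = 1" using x by (auto simp: entries_def)
    have "{0} \<times> {1..length (bwt_of 0)} \<subseteq> {z \<in> entries. key 0 z < key 0 x}"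
      using f1 by (auto simp: key_def entries_def less_prod_def')
    then have "card ({0::nat} \<times> {1..length (bwt_of 0)}) \<le> card {z \<in> entries. key 0 z < key 0 x}" by (intro card_mono) auto
    then have "pos 0 x > length t0" unfolding pos_def by (simp add: card_cartesian_product length_bwt_of(1))
    then show ?thesis using f1 Z0 by simp
  qed
  moreover have "BB 0 1 \<noteq> 0" "BB 0 (Suc N) \<noteq> 0" using B0 by auto
  moreover have "\<forall>q\<in>{2..N}. BB 0 q \<le> 0 \<and> (BB 0 q \<noteq> 0 \<longleftrightarrow> pref 0 (entry_at 0 (q - 1)) \<noteq> pref 0 (entry_at 0 q))"
    using B0 by auto
  ultimately show ?thesis unfolding merge_inv_def by blast
qed

context
  fixes h :: nat
  assumes inv: "merge_inv h"
begin

lemma Zh_eq: "k \<in> {1..N} \<Longrightarrow> ZZ h k = fst (entry_at h k)"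
  using inv entry_at_in_entries pos_entry_at unfolding merge_inv_def by metis

lemma Bh_iff: "q \<in> {2..N} \<Longrightarrow> BB h q \<le> h \<and> (BB h q \<noteq> 0 \<longleftrightarrow> pref h (entry_at h (q - 1)) \<noteq> pref h (entry_at h q))"
  using inv unfolding merge_inv_def by blast

lemma read_row_eq:
  assumes k: "k \<in> {1..N}"
  shows "read_row (ZZ h) k = snd (entry_at h k)"
proof -
  define x where "x = entry_at h k"
  have x: "x \<in> entries" "pos h x = k" using k entry_at_in_entries pos_entry_at unfolding x_def by auto
  have eq: "{i \<in> {1..k}. (ZZ h i = 0) = (ZZ h k = 0)} = pos h ` {x' \<in> entries. fst x' = fst x \<and> snd x' \<le> snd x}"
  proof (rule set_eqI, rule iffI)
    fix i assume i: "i \<in> {i \<in> {1..k}. (ZZ h i = 0) = (ZZ h k = 0)}"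
    then have iN: "i \<in> {1..N}" using k by auto
    define x' where "x' = entry_at h i"
    have x': "x' \<in> entries" "pos h x' = i" using iN entry_at_in_entries pos_entry_at unfolding x'_def by auto
    have "(fst x' = 0) = (fst x = 0)" using i Zh_eq[OF iN] Zh_eq[OF k] unfolding x'_def x_def by simp
    then have f: "fst x' = fst x" using fst_entry_less_2[OF x'(1)] fst_entry_less_2[OF x(1)] by linarith
    have "pos h x' \<le> pos h x" using x x' i by simp
    then have "key h x' \<le> key h x" using pos_le_iff x x' by blast
    then have "snd x' \<le> snd x" using key_le_iff_same_text[OF x(1) x'(1) f] by simp
    then show "i \<in> pos h ` {x' \<in> entries. fst x' = fst x \<and> snd x' \<le> snd x}" using x' f by force
  next
    fix i assume "i \<in> pos h ` {x' \<in> entries. fst x' = fst x \<and> snd x' \<le> snd x}"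
    then obtain x' where x': "x' \<in> entries" "fst x' = fst x" "snd x' \<le> snd x" "i = pos h x'" by blast
    have "key h x' \<le> key h x" using key_le_iff_same_text[OF x(1) x'(1,2)] x'(3) by simp
    then have "pos h x' \<le> k" using pos_le_iff x x'(1) by metis
    moreover have "pos h x' \<in> {1..N}" using pos_range x'(1) by blast
    moreover have "ZZ h (pos h x') = fst x'" using inv x'(1) unfolding merge_inv_def by blast
    moreover have "ZZ h k = fst x" using inv x unfolding merge_inv_def by blast
    ultimately show "i \<in> {i \<in> {1..k}. (ZZ h i = 0) = (ZZ h k = 0)}" using x' by auto
  qed
  have c1: "card (pos h ` {x' \<in> entries. fst x' = fst x \<and> snd x' \<le> snd x}) = card {x' \<in> entries. fst x' = fst x \<and> snd x' \<le> snd x}"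
    by (rule card_image) (rule inj_on_subset[OF inj_on_pos], auto)
  have "{x' \<in> entries. fst x' = fst x \<and> snd x' \<le> snd x} = {fst x} \<times> {1..snd x}"
    using x(1) by (auto simp: entries_def)
  then have c2: "card {x' \<in> entries. fst x' = fst x \<and> snd x' \<le> snd x} = snd x"
    by (simp add: card_cartesian_product)
  have "read_row (ZZ h) k = snd x" unfolding read_row_def eq c1 c2 by (rule refl)
  then show ?thesis by (simp add: x_def)
qed

lemma read_sym_eq: "k \<in> {1..N} \<Longrightarrow> read_sym (ZZ h) k = sym (entry_at h k)"
  unfolding read_sym_def sym_eq_bwt_sel using Zh_eq read_row_eq by simp

lemma count_read_eq:
  assumes k: "k \<in> {1..N}"
  shows "count_read (ZZ h) c (k - 1) = card {x' \<in> entries. sym x' = c \<and> key h x' < key h (entry_at h k)}"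
proof -
  define x where "x = entry_at h k"
  have x: "x \<in> entries" "pos h x = k" using k entry_at_in_entries pos_entry_at unfolding x_def by auto
  have eq: "{i \<in> {1..k - 1}. read_sym (ZZ h) i = c} = pos h ` {x' \<in> entries. sym x' = c \<and> key h x' < key h x}"
  proof (rule set_eqI, rule iffI)
    fix i assume i: "i \<in> {i \<in> {1..k - 1}. read_sym (ZZ h) i = c}"
    then have iN: "i \<in> {1..N}" using k by auto
    define x' where "x' = entry_at h i"
    have x': "x' \<in> entries" "pos h x' = i" using iN entry_at_in_entries pos_entry_at unfolding x'_def by auto
    have "sym x' = c" using i read_sym_eq[OF iN] unfolding x'_def by simp
    moreover have "pos h x' < pos h x" using x x' i by auto
    then have "key h x' < key h x" using pos_less_iff x x' by blast
    ultimately show "i \<in> pos h ` {x' \<in> entries. sym x' = c \<and> key h x' < key h x}" using x' by force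
  next
    fix i assume "i \<in> pos h ` {x' \<in> entries. sym x' = c \<and> key h x' < key h x}"
    then obtain x' where x': "x' \<in> entries" "sym x' = c" "key h x' < key h x" "i = pos h x'" by blast
    have "pos h x' < k" using pos_less_iff x x'(1,3) by metis
    moreover have pN: "pos h x' \<in> {1..N}" using pos_range x'(1) by blast
    moreover have "read_sym (ZZ h) (pos h x') = c" using read_sym_eq[OF pN] entry_at_pos[OF x'(1)] x'(2) by simp
    ultimately show "i \<in> {i \<in> {1..k - 1}. read_sym (ZZ h) i = c}" using x' by auto
  qed
  have c1: "card (pos h ` {x' \<in> entries. sym x' = c \<and> key h x' < key h x}) = card {x' \<in> entries. sym x' = c \<and> key h x' < key h x}"
    by (rule card_image) (rule inj_on_subset[OF inj_on_pos], auto)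
  have "count_read (ZZ h) c (k - 1) = card {x' \<in> entries. sym x' = c \<and> key h x' < key h x}" unfolding count_read_def eq c1 by (rule refl)
  then show ?thesis by (simp add: x_def)
qed

lemma write_pos_eq:
  assumes k: "k \<in> {1..N}"
  shows "write_pos (ZZ h) k = pos (Suc h) (lf (entry_at h k))"
proof -
  define x where "x = entry_at h k"
  have x: "x \<in> entries" "pos h x = k" using k entry_at_in_entries pos_entry_at unfolding x_def by auto
  have p: "pos (Suc h) (lf x) = F_init t0 t1 (sym x) + count_read (ZZ h) (sym x) (k - 1)"
    using pos_Suc_lf[OF x(1)] count_read_eq[OF k] unfolding x_def by simp
  have r: "read_sym (ZZ h) k = sym x" using read_sym_eq[OF k] x_def by simp
  show ?thesis
  proof (cases "sym x \<in> {d0, d1}")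
    case False then show ?thesis using p r unfolding write_pos_def x_def by simp
  next
    case True
    obtain z where "{x' \<in> entries. sym x' = sym x} = {z}"
      using card_sym_sentinel[OF True] by (rule card_1_singletonE)
    then have "{x' \<in> entries. sym x' = sym x} = {x}" using x(1) by auto
    then have "{x' \<in> entries. sym x' = sym x \<and> key h x' < key h x} = {}" by auto
    then have "pos (Suc h) (lf x) = fst x + 1"
      using pos_Suc_lf[OF x(1)] F_init_sentinel[OF x(1) True] by simp
    then show ?thesis
      using True r Zh_eq[OF k] unfolding write_pos_def x_def by simp
  qed
qed

lemma bij_betw_write_pos: "bij_betw (write_pos (ZZ h)) {1..N} {1..N}"
proof -
  have "bij_betw (pos (Suc h) \<circ> lf \<circ> entry_at h) {1..N} {1..N}"
    using bij_betw_trans[OF bij_betw_entry_at bij_betw_trans[OF bij_betw_lf bij_betw_pos]] by (simp add: o_assoc)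
  then show ?thesis
    by (rule bij_betw_cong[THEN iffD1, rotated]) (simp add: write_pos_eq)
qed

lemma inj_on_write_pos: "inj_on (write_pos (ZZ h)) {1..N}"
  using bij_betw_write_pos bij_betw_def by blast

lemma Zh_Suc_lf: "x \<in> entries \<Longrightarrow> ZZ (Suc h) (pos (Suc h) (lf x)) = fst x"
proof -
  assume x: "x \<in> entries"
  have k: "pos h x \<in> {1..N}" using pos_range x by blast
  have "Zn (state_after (ZZ h) (BB h) (Suc h) N) (write_pos (ZZ h) (pos h x)) = ZZ h (pos h x)"
    using Zn_state_after[OF Suc_not_Zero inj_on_write_pos k] .
  then show ?thesis using Zh_Suc write_pos_eq[OF k] entry_at_pos[OF x] Zh_eq[OF k] by simp
qed

lemma Bh_Suc_eq:
  "BB (Suc h) q = (if BB h q = 0 \<and> (\<exists>i\<in>{1..N}. write_pos (ZZ h) i = q \<and>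
      last_id (ZZ h) (BB h) (Suc h) (read_sym (ZZ h) i) (i - 1) \<noteq> current_id (BB h) (Suc h) i)
    then Suc h else BB h q)"
  unfolding Bh_Suc by (rule Bs_state_after[OF Suc_not_Zero inj_on_write_pos])

lemma iter_log_closed_form:
  "iter_log t0 t1 d0 d1 h = map (\<lambda>i. (i, read_sym (ZZ h) i, write_pos (ZZ h) i)) [1..<Suc N]"
  using state_after_counters[where Z="ZZ h" and B="BB h" and H="Suc h" and k=N] unfolding iter_log_eq by blast

lemma Bh_Suc_nonzero_iff:
  assumes q: "q \<in> {2..N}" and x: "x \<in> entries" "lf x = entry_at (Suc h) q"
  shows "BB (Suc h) q \<noteq> 0 \<longleftrightarrow> BB h q \<noteq> 0 \<or>
    last_id (ZZ h) (BB h) (Suc h) (sym x) (pos h x - 1) \<noteq> current_id (BB h) (Suc h) (pos h x)"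
proof -
  have k: "pos h x \<in> {1..N}" using pos_range[OF x(1)] .
  have "write_pos (ZZ h) (pos h x) = q"
    using write_pos_eq[OF k] entry_at_pos[OF x(1)] x(2) pos_entry_at[of q "Suc h"] q by simp
  then have "(\<exists>i\<in>{1..N}. write_pos (ZZ h) i = q \<and> P i) \<longleftrightarrow> P (pos h x)" for P
    using k inj_on_write_pos by (auto dest: inj_onD)
  then show ?thesis
    using Bh_Suc_eq[of q] read_sym_eq[OF k] entry_at_pos[OF x(1)] by auto
qed

lemma read_before_adjacent:
  assumes q: "q \<in> {2..N}"
    and x: "x \<in> entries" "lf x = entry_at (Suc h) q"
    and x': "x' \<in> entries" "lf x' = entry_at (Suc h) (q - 1)"
    and i: "i \<in> {1..N}" "i < pos h x" "read_sym (ZZ h) i = sym x"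
  shows "sym x' = sym x \<and> i \<le> pos h x'"
proof -
  define x'' where "x'' = entry_at h i"
  have x'': "x'' \<in> entries" "pos h x'' = i" "sym x'' = sym x"
    using entry_at_in_entries[OF i(1)] pos_entry_at[OF i(1)] read_sym_eq[OF i(1)] i(3)
    unfolding x''_def by auto
  have "key h x'' < key h x" using pos_less_iff x x'' i by metis
  then have "key (Suc h) (lf x'') < key (Suc h) (lf x)"
    using key_Suc_lf_less_iff[OF x(1) x''(1)] x''(3) by simp
  then have le: "key (Suc h) (lf x'') \<le> key (Suc h) (lf x')"
    using no_key_between[OF q lf_in_entries[OF x''(1)], where g="Suc h"] x(2) x'(2) by (auto simp: not_less)
  have "q - 1 < q" "q - 1 \<in> {1..N}" "q \<in> {1..N}" using q by auto
  then have "key (Suc h) (lf x') < key (Suc h) (lf x)"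
    using key_entry_at_less x(2) x'(2) by metis
  then have "sym x' \<le> sym x" using sym_le_if_key_Suc_lf_le[OF x(1) x'(1)] by (meson less_imp_le)
  moreover have "sym x \<le> sym x'" using sym_le_if_key_Suc_lf_le[OF x'(1) x''(1) le] x''(3) by simp
  ultimately have "sym x' = sym x" by simp
  moreover have "key h x'' \<le> key h x'"
  proof (cases "key (Suc h) (lf x'') = key (Suc h) (lf x')")
    case True
    have "lf x'' = lf x'" by (rule inj_onD[OF inj_key True UNIV_I UNIV_I])
    then show ?thesis using inj_onD[OF inj_on_lf _ x''(1) x'(1)] by simp
  next
    case False
    then show ?thesis
      using le key_Suc_lf_less_iff[OF x'(1) x''(1)] x''(3) \<open>sym x' = sym x\<close> by (simp add: le_less)
  qed
  ultimately show ?thesis using pos_le_iff[OF x''(1) x'(1), of h] x''(2) by auto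
qed

lemma current_id_change_iff_pref:
  assumes "k' < k" "k \<in> {1..N}" "k' \<in> {1..N}"
  shows "current_id (BB h) (Suc h) k' \<noteq> current_id (BB h) (Suc h) k \<longleftrightarrow>
    pref h (entry_at h k') \<noteq> pref h (entry_at h k)"
proof -
  have "current_id (BB h) (Suc h) k' \<noteq> current_id (BB h) (Suc h) k \<longleftrightarrow>
      (\<exists>p\<in>{k'<..k}. BB h p \<noteq> 0 \<and> BB h p \<noteq> Suc h)"
    using current_id_change_iff assms(1) by simp
  also have "\<dots> \<longleftrightarrow> (\<exists>p\<in>{k'<..k}. pref h (entry_at h (p - 1)) \<noteq> pref h (entry_at h p))"
  proof -
    have "(BB h p \<noteq> 0 \<and> BB h p \<noteq> Suc h) \<longleftrightarrow> pref h (entry_at h (p - 1)) \<noteq> pref h (entry_at h p)"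
      if "p \<in> {k'<..k}" for p
      using Bh_iff[of p] that assms by fastforce
    then show ?thesis by (meson bex_cong)
  qed
  also have "\<dots> \<longleftrightarrow> pref h (entry_at h k') \<noteq> pref h (entry_at h k)"
    by (rule mono_step_change_iff) (use assms in \<open>auto intro!: pref_entry_at_mono\<close>)
  finally show ?thesis .
qed

lemma Bh_boundary_persists:
  assumes "q \<in> {2..N}" "BB h q \<noteq> 0" "h \<le> g"
  shows "pref g (entry_at g (q - 1)) \<noteq> pref g (entry_at g q)"
proof -
  have "q - 1 \<in> {1..N}" "q \<in> {1..N}" using assms(1) by auto
  then have "pref h (entry_at g (q - 1)) \<noteq> pref h (entry_at g q)"
    using Bh_iff[OF assms(1)] assms(2) pref_entry_at_refine[OF assms(3)] by metis
  then show ?thesis using take_pref[OF assms(3)] by metis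
qed

lemma Bh_Suc_boundary_iff:
  assumes q: "q \<in> {2..N}"
  shows "BB (Suc h) q \<noteq> 0 \<longleftrightarrow>
    pref (Suc h) (entry_at (Suc h) (q - 1)) \<noteq> pref (Suc h) (entry_at (Suc h) q)"
proof -
  have qN: "q - 1 \<in> {1..N}" "q \<in> {1..N}" using q by auto
  obtain x where x: "x \<in> entries" "lf x = entry_at (Suc h) q"
    using entry_eq_lf entry_at_in_entries[OF qN(2)] by metis
  obtain x' where x': "x' \<in> entries" "lf x' = entry_at (Suc h) (q - 1)"
    using entry_eq_lf entry_at_in_entries[OF qN(1)] by metis
  define k where "k = pos h x"
  define k' where "k' = pos h x'"
  have kN: "k \<in> {1..N}" "k' \<in> {1..N}" using pos_range x x' unfolding k_def k'_def by auto
  have prefs: "pref (Suc h) (entry_at (Suc h) q) = sym x # pref h x"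
    "pref (Suc h) (entry_at (Suc h) (q - 1)) = sym x' # pref h x'"
    using pref_Suc_lf x x' by metis+
  note reads = read_before_adjacent[OF q x x']
  have "q - 1 < q" "q - 1 \<in> {1..N}" "q \<in> {1..N}" using q by auto
  then have "key (Suc h) (lf x') < key (Suc h) (lf x)"
    using key_entry_at_less x(2) x'(2) by metis
  then have "sym x' < sym x \<or> sym x' = sym x \<and> key h x' < key h x"
    using key_Suc_lf_less_iff[OF x(1) x'(1)] by simp
  then show ?thesis
  proof
    assume "sym x' < sym x"
    then have "\<forall>i\<in>{1..k - 1}. read_sym (ZZ h) i \<noteq> sym x"
    proof (intro ballI notI)
      fix i assume i: "i \<in> {1..k - 1}" "read_sym (ZZ h) i = sym x"
      moreover have "i \<in> {1..N}" "i < pos h x" using i(1) kN unfolding k_def by auto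
      ultimately have "sym x' = sym x" using reads by blast
      then show False using \<open>sym x' < sym x\<close> by simp
    qed
    then have "last_id (ZZ h) (BB h) (Suc h) (sym x) (k - 1) = -1" by (rule last_id_unread)
    then show ?thesis
      using Bh_Suc_nonzero_iff[OF q x] current_id_nonneg[of "BB h" "Suc h" k] prefs \<open>sym x' < sym x\<close>
      unfolding k_def by auto
  next
    assume same: "sym x' = sym x \<and> key h x' < key h x"
    then have "k' < k" using pos_less_iff x x' unfolding k_def k'_def by blast
    moreover have "read_sym (ZZ h) k' = sym x"
      using read_sym_eq kN entry_at_pos x' same unfolding k'_def by simp
    moreover have "\<forall>i\<in>{k'<..k - 1}. read_sym (ZZ h) i \<noteq> sym x"
    proof (intro ballI notI)
      fix i assume i: "i \<in> {k'<..k - 1}" "read_sym (ZZ h) i = sym x"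
      moreover have "i \<in> {1..N}" "i < pos h x" using i(1) kN unfolding k_def k'_def by auto
      ultimately have "i \<le> k'" using reads unfolding k'_def by blast
      then show False using i(1) by simp
    qed
    ultimately have "last_id (ZZ h) (BB h) (Suc h) (sym x) (k - 1) = current_id (BB h) (Suc h) k'"
      using kN by (intro last_id_eq) auto
    moreover have "current_id (BB h) (Suc h) k' \<noteq> current_id (BB h) (Suc h) k \<longleftrightarrow> pref h x' \<noteq> pref h x"
      using current_id_change_iff_pref[OF \<open>k' < k\<close> kN] entry_at_pos x x' unfolding k_def k'_def by simp
    moreover have "BB h q \<noteq> 0 \<Longrightarrow> pref h x' \<noteq> pref h x"
      using Bh_boundary_persists[OF q _ le_SucI[OF order_refl]] prefs same by auto
    ultimately show ?thesis
      using Bh_Suc_nonzero_iff[OF q x] prefs same unfolding k_def by auto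
  qed
qed

lemma merge_inv_Suc: "merge_inv (Suc h)"
proof -
  have "ZZ (Suc h) (pos (Suc h) y) = fst y" if "y \<in> entries" for y
    using entry_eq_lf[OF that] Zh_Suc_lf by auto
  moreover have "BB (Suc h) 1 \<noteq> 0" "BB (Suc h) (Suc N) \<noteq> 0"
    using inv Bh_Suc_eq[of 1] Bh_Suc_eq[of "Suc N"] unfolding merge_inv_def by auto
  moreover have "BB (Suc h) q \<le> Suc h" if "q \<in> {2..N}" for q
    using Bh_Suc_eq[of q] Bh_iff[OF that] by auto
  ultimately show ?thesis unfolding merge_inv_def using Bh_Suc_boundary_iff by blast
qed

end

lemma merge_inv_holds: "merge_inv h"
  by (induction h) (auto intro: merge_inv_0 merge_inv_Suc)

end

section \<open>Blocks\<close>

context merge_texts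
begin

lemma mem_block_iff_pref:
  assumes "is_block (BB h) N l m"
  shows "p \<in> {l..m} \<longleftrightarrow> p \<in> {1..N} \<and> pref h (entry_at h p) = pref h (entry_at h l)"
proof -
  define P where "P = (\<lambda>p. pref h (entry_at h p))"
  have lm: "1 \<le> l" "l \<le> m" "m \<le> N" "BB h l \<noteq> 0" "\<And>i. l < i \<Longrightarrow> i \<le> m \<Longrightarrow> BB h i = 0"
    "BB h (m + 1) \<noteq> 0"
    using assms unfolding is_block_def by auto
  note Bh = Bh_iff[OF merge_inv_holds[of h]]
  have mono: "p \<le> p' \<Longrightarrow> p \<in> {1..N} \<Longrightarrow> p' \<in> {1..N} \<Longrightarrow> P p \<le> P p'" for p p'
    unfolding P_def by (rule pref_entry_at_mono) auto
  have inside: "P p' = P l" if "p' \<in> {l..m}" for p'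
  proof -
    have "\<not> (\<exists>q\<in>{l<..p'}. P (q - 1) \<noteq> P q)"
    proof
      assume "\<exists>q\<in>{l<..p'}. P (q - 1) \<noteq> P q"
      then obtain q where q: "q \<in> {l<..p'}" "P (q - 1) \<noteq> P q" by blast
      then have "q \<in> {2..N}" "BB h q = 0" using that lm by auto
      then show False using Bh[of q] q(2) unfolding P_def by simp
    qed
    moreover have "(\<exists>q\<in>{l<..p'}. P (q - 1) \<noteq> P q) \<longleftrightarrow> P l \<noteq> P p'"
      by (rule mono_step_change_iff) (use that lm in \<open>auto intro: mono\<close>)
    ultimately show ?thesis by simp
  qed
  have outside: "P p' \<noteq> P l" if "p' \<in> {1..N}" "p' \<notin> {l..m}" for p'
  proof (cases "p' < l")
    case True
    then have "l \<in> {2..N}" using that lm by auto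
    then have "P (l - 1) \<noteq> P l" using Bh[of l] lm(4) unfolding P_def by simp
    moreover have "P p' \<le> P (l - 1)" using True that lm by (intro mono) auto
    moreover have "P (l - 1) \<le> P l" using True that lm by (intro mono) auto
    ultimately show ?thesis by (metis order_antisym)
  next
    case False
    then have "m < p'" "m + 1 \<in> {2..N}" using that lm by auto
    then have "P m \<noteq> P (m + 1)" using Bh[of "m + 1"] lm(6) unfolding P_def by simp
    moreover have "P m \<le> P (m + 1)" using \<open>m < p'\<close> that lm by (intro mono) auto
    moreover have "P (m + 1) \<le> P p'" using \<open>m < p'\<close> that lm by (intro mono) auto
    moreover have "P m = P l" using inside[of m] lm by simp
    ultimately show ?thesis by (metis order_antisym)
  qed
  have "{l..m} \<subseteq> {1..N}" using lm by auto
  then show ?thesis using inside[of p] outside[of p] unfolding P_def by blast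
qed

lemma pref_class_eq_interval:
  assumes C: "C = {p \<in> {1..N}. pref g (entry_at g p) = u}" and "C \<noteq> {}"
  shows "C = {Min C..Max C}"
proof (rule set_eqI, rule iffI)
  have fin: "finite C" using C by simp
  fix p assume p: "p \<in> {Min C..Max C}"
  have "Min C \<in> C" "Max C \<in> C" using fin \<open>C \<noteq> {}\<close> by auto
  then have N: "Min C \<in> {1..N}" "Max C \<in> {1..N}"
    and u: "pref g (entry_at g (Min C)) = u" "pref g (entry_at g (Max C)) = u"
    using C by auto
  then have pN: "p \<in> {1..N}" using p by auto
  have "pref g (entry_at g (Min C)) \<le> pref g (entry_at g p)" "pref g (entry_at g p) \<le> pref g (entry_at g (Max C))"
    using p N pN by (auto intro!: pref_entry_at_mono)
  then have "pref g (entry_at g p) = u" using u by (metis order_antisym)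
  then show "p \<in> C" using C pN by simp
next
  fix p assume "p \<in> C"
  then show "p \<in> {Min C..Max C}" using C by simp
qed

lemma pref_class_is_block:
  assumes C: "C = {p \<in> {1..N}. pref g (entry_at g p) = u}" and "C \<noteq> {}"
  shows "C = {Min C..Max C} \<and> is_block (BB g) N (Min C) (Max C)"
proof -
  define P where "P = (\<lambda>p. pref g (entry_at g p))"
  have C_iff: "p \<in> C \<longleftrightarrow> p \<in> {1..N} \<and> P p = u" for p using C unfolding P_def by simp
  have fin: "finite C" using C by simp
  define lo where "lo = Min C"
  define hi where "hi = Max C"
  have mem: "lo \<in> C" "hi \<in> C" and bounds: "\<And>p. p \<in> C \<Longrightarrow> lo \<le> p \<and> p \<le> hi"
    using fin \<open>C \<noteq> {}\<close> unfolding lo_def hi_def by auto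
  have N: "lo \<in> {1..N}" "hi \<in> {1..N}" and u: "P lo = u" "P hi = u"
    using mem C_iff by auto
  have interval: "C = {lo..hi}"
    using pref_class_eq_interval[OF assms] unfolding lo_def hi_def .
  note Bh = Bh_iff[OF merge_inv_holds[of g]]
  have ends: "BB g 1 \<noteq> 0" "BB g (Suc N) \<noteq> 0"
    using merge_inv_holds[of g] unfolding merge_inv_def by blast+
  have "is_block (BB g) N lo hi"
    unfolding is_block_def
  proof (intro conjI allI impI)
    show "1 \<le> lo" "lo \<le> hi" "hi \<le> N" using N(1) N(2) bounds[OF mem(1)] by simp_all
    show "BB g lo \<noteq> 0"
    proof (cases "lo = 1")
      case False
      then have q: "lo \<in> {2..N}" using N by auto
      have "lo - 1 \<notin> C"
      proof
        assume "lo - 1 \<in> C"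
        then have "lo \<le> lo - 1" using bounds by blast
        then show False using q by (simp only: atLeastAtMost_iff) linarith
      qed
      moreover have "lo - 1 \<in> {1..N}" using q by auto
      ultimately have "P (lo - 1) \<noteq> P lo" unfolding C_iff u by blast
      then show ?thesis using Bh[OF q] unfolding P_def by simp
    qed (use ends in simp)
    show "BB g (hi + 1) \<noteq> 0"
    proof (cases "hi = N")
      case False
      then have q: "hi + 1 \<in> {2..N}" using N by auto
      have "hi + 1 \<notin> C"
      proof
        assume "hi + 1 \<in> C"
        then have "hi + 1 \<le> hi" using bounds by blast
        then show False by simp
      qed
      moreover have "hi + 1 \<in> {1..N}" using q by auto
      ultimately have "P hi \<noteq> P (hi + 1)" unfolding C_iff u by blast
      then show ?thesis using Bh[OF q] unfolding P_def by simp
    qed (use ends in simp)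
    fix i assume "lo < i \<and> i \<le> hi"
    then have q: "i \<in> {2..N}" and "i \<in> C" "i - 1 \<in> C" using N interval by auto
    then have "P (i - 1) = P i" unfolding C_iff by simp
    then show "BB g i = 0" using Bh[OF q] unfolding P_def by simp
  qed
  with interval show ?thesis unfolding lo_def hi_def ..
qed

lemma Zh_stable_on_block:
  assumes blk: "is_block (BB h) N l m" and mono: "monochrome (ZZ h) l m"
    and "h < g" and i: "i \<in> {l..m}"
  shows "ZZ g i = ZZ h i"
proof -
  have iN: "i \<in> {1..N}" using i blk unfolding is_block_def by auto
  define y where "y = entry_at g i"
  have y: "y \<in> entries" using entry_at_in_entries[OF iN] y_def by simp
  define p where "p = pos h y"
  have pN: "p \<in> {1..N}" and y_p: "entry_at h p = y"
    using pos_range[OF y] entry_at_pos[OF y] p_def by auto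
  have "pref h (entry_at h p) = pref h (entry_at h i)"
    using pref_entry_at_refine[of h g i] \<open>h < g\<close> iN y_p y_def by simp
  moreover have "pref h (entry_at h i) = pref h (entry_at h l)" using mem_block_iff_pref[OF blk] i by blast
  ultimately have "p \<in> {l..m}" using mem_block_iff_pref[OF blk] pN by simp
  then have "ZZ h p = ZZ h i" using mono i unfolding monochrome_def by auto
  moreover have "ZZ h p = fst y" using Zh_eq[OF merge_inv_holds pN] y_p by simp
  moreover have "ZZ g i = fst y" using Zh_eq[OF merge_inv_holds iN] y_def by simp
  ultimately show ?thesis by simp
qed

lemma iter_log_targets_eq_pref_class:
  assumes blk: "is_block (BB h) N l m"
  shows "{j. \<exists>k \<in> {l..m}. (k, c, j) \<in> set (iter_log t0 t1 d0 d1 h)} =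
    {p \<in> {1..N}. pref (Suc h) (entry_at (Suc h) p) = c # pref h (entry_at h l)}"
    (is "?J = ?C")
proof -
  note inv = merge_inv_holds[of h]
  have blkN: "{l..m} \<subseteq> {1..N}" using blk unfolding is_block_def by auto
  have mem: "(k, c, j) \<in> set (iter_log t0 t1 d0 d1 h) \<longleftrightarrow>
      k \<in> {1..N} \<and> c = read_sym (ZZ h) k \<and> j = write_pos (ZZ h) k" for k j
    unfolding iter_log_closed_form[OF inv] by (auto simp del: upt_Suc)
  show ?thesis
  proof (rule set_eqI, rule iffI)
    fix j assume "j \<in> ?J"
    then obtain k where "k \<in> {l..m}" "(k, c, j) \<in> set (iter_log t0 t1 d0 d1 h)" by blast
    then have k: "k \<in> {l..m}" "read_sym (ZZ h) k = c" "j = write_pos (ZZ h) k"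
      using mem by auto
    define x where "x = entry_at h k"
    have kN: "k \<in> {1..N}" using k(1) blkN by auto
    then have x: "x \<in> entries" using entry_at_in_entries x_def by simp
    have "pref h x = pref h (entry_at h l)" using mem_block_iff_pref[OF blk] k(1) x_def by blast
    moreover have "j = pos (Suc h) (lf x)" using write_pos_eq[OF inv kN] k(3) x_def by simp
    moreover have "sym x = c" using read_sym_eq[OF inv kN] k(2) x_def by simp
    ultimately show "j \<in> ?C"
      using pos_range[OF lf_in_entries[OF x]] entry_at_pos[OF lf_in_entries[OF x]] pref_Suc_lf[OF x]
      by simp
  next
    fix p assume p: "p \<in> ?C"
    then have "entry_at (Suc h) p \<in> entries" using entry_at_in_entries by simp
    then obtain x where x: "x \<in> entries" "lf x = entry_at (Suc h) p"
      using entry_eq_lf by metis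
    define k where "k = pos h x"
    have kN: "k \<in> {1..N}" and x_k: "entry_at h k = x"
      using pos_range[OF x(1)] entry_at_pos[OF x(1)] k_def by auto
    have "sym x = c" "pref h x = pref h (entry_at h l)" using p x(2) pref_Suc_lf[OF x(1)] by auto
    then have "k \<in> {l..m}" "read_sym (ZZ h) k = c"
      using mem_block_iff_pref[OF blk] kN x_k read_sym_eq[OF inv kN] by auto
    moreover have "p = write_pos (ZZ h) k"
      using x(2) pos_entry_at p write_pos_eq[OF inv kN] x_k by auto
    ultimately have "(k, c, p) \<in> set (iter_log t0 t1 d0 d1 h)" using mem kN by simp
    then show "p \<in> ?J" using \<open>k \<in> {l..m}\<close> by blast
  qed
qed

lemma Zh_Suc_on_targets:
  assumes blk: "is_block (BB h) N l m" and mono: "monochrome (ZZ h) l m"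
    and "k \<in> {l..m}" "(k, c, j) \<in> set (iter_log t0 t1 d0 d1 h)"
  shows "ZZ (Suc h) j = ZZ h l"
proof -
  note inv = merge_inv_holds[of h]
  have kN: "k \<in> {1..N}" using assms(3) blk unfolding is_block_def by auto
  have "j = write_pos (ZZ h) k"
    using assms(4) unfolding iter_log_closed_form[OF inv] by (auto simp del: upt_Suc)
  then have "ZZ (Suc h) j = fst (entry_at h k)"
    using write_pos_eq[OF inv kN] Zh_Suc_lf[OF inv entry_at_in_entries[OF kN]] by simp
  also have "\<dots> = ZZ h k" using Zh_eq[OF inv kN] by simp
  also have "\<dots> = ZZ h l" using mono assms(3) blk unfolding monochrome_def is_block_def by auto
  finally show ?thesis .
qed

end

theorem lemma6:
  fixes t0 t1 :: "'a::{linorder, finite} list" and d0 d1 :: 'a and h l m :: nat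
  assumes "valid_texts t0 t1 d0 d1"
    and "is_block (Bh t0 t1 d0 d1 h) (length t0 + length t1) l m"
    and "monochrome (Zh t0 t1 d0 d1 h) l m"
  shows "(\<forall>g > h. \<forall>i \<in> {l..m}. Zh t0 t1 d0 d1 g i = Zh t0 t1 d0 d1 h i) \<and>
         (\<forall>c. let J = {j. \<exists>k \<in> {l..m}. (k, c, j) \<in> set (iter_log t0 t1 d0 d1 h)}
              in J \<noteq> {} \<longrightarrow>
                 (\<exists>l' m'. J = {l'..m'} \<and>
                    is_block (Bh t0 t1 d0 d1 (Suc h)) (length t0 + length t1) l' m' \<and>
                    monochrome (Zh t0 t1 d0 d1 (Suc h)) l' m'))"
proof -
  interpret merge_texts t0 t1 d0 d1 using assms(1) by unfold_locales
  have blk: "is_block (BB h) N l m" using assms(2) by (simp add: N_def)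
  have "\<exists>l' m'. J = {l'..m'} \<and> is_block (BB (Suc h)) N l' m' \<and> monochrome (ZZ (Suc h)) l' m'"
    if J: "J = {j. \<exists>k \<in> {l..m}. (k, c, j) \<in> set (iter_log t0 t1 d0 d1 h)}" "J \<noteq> {}" for J c
  proof -
    obtain l' m' where J': "J = {l'..m'}" "is_block (BB (Suc h)) N l' m'"
      using pref_class_is_block[OF iter_log_targets_eq_pref_class[OF blk]] J by blast
    have "ZZ (Suc h) j = ZZ h l" if "j \<in> J" for j
      using Zh_Suc_on_targets[OF blk assms(3)] that J(1) by blast
    moreover have "ZZ h l = 0 \<or> ZZ h l = 1"
      using assms(3) blk unfolding monochrome_def is_block_def by auto
    ultimately have "monochrome (ZZ (Suc h)) l' m'" using J'(1) unfolding monochrome_def by auto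
    with J' show ?thesis by blast
  qed
  then show ?thesis
    using Zh_stable_on_block[OF blk assms(3)] by (simp add: Let_def N_def)
qed

end
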